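(* Let $p>1$ and $q>1$. Let $f\in C_0^2(\mathbb{R})$ and $g\in C_0^1(\mathbb{R})$ satisfy $\operatorname{supp} f,\ \operatorname{supp} g\subset\{x\in\mathbb{R}:|x|\le R\}$ for some $R\ge 1$. Consider the initial value problem \[ \begin{cases} u_{tt}-u_{xx}=|u_t|^p|u_x|^q & \text{in } \mathbb{R}\times(0,T),\\ u(x,0)=\varepsilon f(x),\quad u_t(x,0)=\varepsilon g(x), & x\in\mathbb{R}, \end{cases} \] with a parameter $\varepsilon>0$. Then there exist constants $\varepsilon_0=\varepsilon_0(f,g,p,q,R)>0$ and $c>0$ (independent of $\varepsilon$) such that for every $0<\varepsilon\le\varepsilon_0$, a classical solution $u\in C^2(\mathbb{R}\times[0,T])$ of this problem exists whenever $T\le c\,\varepsilon^{-(p+q-1)}$. In particular the lifespan satisfies $T(\varepsilon)\ge c\,\varepsilon^{-(p+q-1)}$ for $0<\varepsilon\le\varepsilon_0$.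
   Context: The lifespan $T(\varepsilon)$ is the supremum of all $T>0$ such that a classical solution of the problem exists on $\mathbb{R}\times[0,T]$ for the fixed data $(f,g)$. *)

theory Defs
  imports "HOL-Analysis.Analysis"
begin

definition C2_supp :: "real \<Rightarrow> (real \<Rightarrow> real) \<Rightarrow> bool" where
  "C2_supp R f \<longleftrightarrow>
     (\<exists>f' f''. (\<forall>x. (f has_real_derivative f' x) (at x)) \<and>
               (\<forall>x. (f' has_real_derivative f'' x) (at x)) \<and>
               continuous_on UNIV f'') \<and>
     (\<forall>x. \<bar>x\<bar> > R \<longrightarrow> f x = 0)"

definition C1_supp :: "real \<Rightarrow> (real \<Rightarrow> real) \<Rightarrow> bool" where
  "C1_supp R g \<longleftrightarrow>
     (\<exists>g'. (\<forall>x. (g has_real_derivative g' x) (at x)) \<and> continuous_on UNIV g') \<and>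
     (\<forall>x. \<bar>x\<bar> > R \<longrightarrow> g x = 0)"

text \<open>Points are pairs (x,t); derivatives at the
  boundary t = 0, t = T are taken within the closed strip. ux, ut are the first
  partials, uxx, uxt, utx, utt the second partials (all continuous on the strip).\<close>
definition classical_solution ::
  "real \<Rightarrow> real \<Rightarrow> real \<Rightarrow> (real \<Rightarrow> real) \<Rightarrow> (real \<Rightarrow> real) \<Rightarrow> real
   \<Rightarrow> (real \<times> real \<Rightarrow> real) \<Rightarrow> bool" where
  "classical_solution p q \<epsilon> f g T u \<longleftrightarrow>
     (let S = (UNIV :: real set) \<times> {0..T} in
      \<exists>ux ut uxx uxt utx utt.
        (\<forall>z\<in>S. (u has_derivative (\<lambda>(h,k). ux z * h + ut z * k)) (at z within S)) \<and>
        (\<forall>z\<in>S. (ux has_derivative (\<lambda>(h,k). uxx z * h + uxt z * k)) (at z within S)) \<and>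
        (\<forall>z\<in>S. (ut has_derivative (\<lambda>(h,k). utx z * h + utt z * k)) (at z within S)) \<and>
        continuous_on S uxx \<and> continuous_on S uxt \<and>
        continuous_on S utx \<and> continuous_on S utt \<and>
        (\<forall>x t. 0 < t \<and> t < T \<longrightarrow>
           utt (x,t) - uxx (x,t) = \<bar>ut (x,t)\<bar> powr p * \<bar>ux (x,t)\<bar> powr q) \<and>
        (\<forall>x. u (x,0) = \<epsilon> * f x \<and> ut (x,0) = \<epsilon> * g x))"

text \<open>Lifespan: supremum of all T > 0 for which a classical solution exists
  (in the extended reals, so that it may be infinite).\<close>
definition lifespan ::
  "real \<Rightarrow> real \<Rightarrow> real \<Rightarrow> (real \<Rightarrow> real) \<Rightarrow> (real \<Rightarrow> real) \<Rightarrow> ereal" where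
  "lifespan p q \<epsilon> f g =
     Sup (ereal ` {T. T > 0 \<and> (\<exists>u. classical_solution p q \<epsilon> f g T u)})"

end

theory Submission
  imports Defs
begin

text \<open>
  In the Riemann invariants \<open>a = u\<^sub>t + u\<^sub>x\<close> and \<open>b = u\<^sub>t - u\<^sub>x\<close> the equation becomes the transport
  system \<open>a\<^sub>t - a\<^sub>x = b\<^sub>t + b\<^sub>x = F(a, b)\<close> with \<open>F(a, b) = |(a + b)/2|\<^sup>p |(a - b)/2|\<^sup>q\<close>,
  and \<open>u\<close> is recovered as \<open>\<epsilon> f + \<integral>\<^sub>0\<^sup>t (a + b)/2\<close>. Along the characteristics,
  \<open>A(x, t) = a(x - t, t)\<close> and \<open>B(x, t) = b(x + t, t)\<close> solve integral equations whose data have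
  size \<open>\<epsilon>\<close>. As \<open>F\<close> is \<open>C\<^sup>1\<close> (here \<open>p, q > 1\<close> is used) and homogeneous of degree \<open>p + q\<close>,
  Picard iteration contracts on the ball of radius \<open>2 \<epsilon> C\<^sub>0\<close> as long as
  \<open>T \<epsilon>\<^bsup>p+q-1\<^esup>\<close> is small. The space derivatives are iterated alongside: they solve a linear
  problem whose coefficients converge uniformly, so they converge too and the limit is \<open>C\<^sup>1\<close>.
\<close>

definition abs_pow :: "real \<Rightarrow> real \<Rightarrow> real" where
  "abs_pow p s = \<bar>s\<bar> powr p"

definition abs_pow_deriv :: "real \<Rightarrow> real \<Rightarrow> real" where
  "abs_pow_deriv p s = p * sgn s * \<bar>s\<bar> powr (p - 1)"

lemma tendsto_abs_powr_zero:
  assumes "e > 0" shows "((\<lambda>y::real. \<bar>y\<bar> powr e) \<longlongrightarrow> 0) (at 0)"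
  by (rule tendsto_zero_powrI) (auto intro!: tendsto_eq_intros assms)

lemma has_real_derivative_abs_pow:
  assumes p: "p > 1" shows "(abs_pow p has_real_derivative abs_pow_deriv p s) (at s)"
proof -
  consider "s > 0" | "s < 0" | "s = 0" by linarith
  then show ?thesis
  proof cases
    case 1
    show ?thesis
    proof (rule has_field_derivative_transform_within_open[where S="{0<..}"])
      show "((\<lambda>x. x powr p) has_real_derivative abs_pow_deriv p s) (at s)"
        using has_real_derivative_powr[OF 1] 1 by (simp add: abs_pow_deriv_def)
    qed (use 1 in \<open>auto simp: abs_pow_def\<close>)
  next
    case 2
    have "((\<lambda>x. (-x) powr p) has_real_derivative p * (-s) powr (p - 1) * (-1)) (at s)"
      using DERIV_chain2[where f="\<lambda>x. x powr p", OF _ DERIV_minus[OF DERIV_ident]]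
        has_real_derivative_powr 2 by simp
    then have "((\<lambda>x. (-x) powr p) has_real_derivative abs_pow_deriv p s) (at s)"
      using 2 by (simp add: abs_pow_deriv_def)
    then show ?thesis
    proof (rule has_field_derivative_transform_within_open[where S="{..<0}"])
      show "(-x) powr p = abs_pow p x" if "x \<in> {..<0}" for x
        using that by (simp add: abs_pow_def)
    qed (use 2 in simp_all)
  next
    case 3
    have "norm ((abs_pow p x - abs_pow p 0) / (x - 0)) \<le> \<bar>x\<bar> powr (p - 1)" for x
      by (cases "x = 0") (auto simp: abs_pow_def powr_diff abs_divide)
    then have "((\<lambda>y. (abs_pow p y - abs_pow p 0) / (y - 0)) \<longlongrightarrow> 0) (at 0)"
      using p by (intro Lim_null_comparison[OF _ tendsto_abs_powr_zero[of "p - 1"]] always_eventually)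
        auto
    then show ?thesis using 3 by (simp add: has_field_derivative_iff abs_pow_deriv_def)
  qed
qed

lemma isCont_abs_pow_deriv:
  assumes p: "p > 1" shows "isCont (abs_pow_deriv p) s"
proof (cases "s = 0")
  case False
  have "abs_pow_deriv p = (\<lambda>x. p * (x / \<bar>x\<bar>) * \<bar>x\<bar> powr (p - 1))"
    by (rule ext) (simp add: abs_pow_deriv_def sgn_if)
  then show ?thesis using False by (simp del: divide_const_simps) (intro continuous_intros; auto)
next
  case True
  have "(abs_pow_deriv p \<longlongrightarrow> 0) (at 0)"
  proof (rule Lim_null_comparison)
    show "\<forall>\<^sub>F x in at 0. norm (abs_pow_deriv p x) \<le> p * \<bar>x\<bar> powr (p - 1)"
      using p by (intro always_eventually) (auto simp: abs_pow_deriv_def abs_mult sgn_if)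
    show "((\<lambda>x. p * \<bar>x\<bar> powr (p - 1)) \<longlongrightarrow> 0) (at 0)"
      using tendsto_mult_right_zero[OF tendsto_abs_powr_zero[of "p - 1"], of p] p by simp
  qed
  then show ?thesis using True by (simp add: isCont_def abs_pow_deriv_def)
qed

lemma abs_pow_le: "p > 0 \<Longrightarrow> \<bar>s\<bar> \<le> r \<Longrightarrow> \<bar>abs_pow p s\<bar> \<le> r powr p"
  by (simp add: abs_pow_def powr_mono2)

lemma abs_pow_deriv_le: "p > 1 \<Longrightarrow> \<bar>s\<bar> \<le> r \<Longrightarrow> \<bar>abs_pow_deriv p s\<bar> \<le> p * r powr (p - 1)"
  by (auto simp: abs_pow_deriv_def abs_mult sgn_if intro!: powr_mono2 mult_left_mono)

lemma abs_pow_lipschitz: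
  assumes p: "p > 1" and x: "\<bar>x\<bar> \<le> r" and y: "\<bar>y\<bar> \<le> r"
  shows "\<bar>abs_pow p x - abs_pow p y\<bar> \<le> p * r powr (p - 1) * \<bar>x - y\<bar>"
proof -
  have ordered: "\<bar>abs_pow p b - abs_pow p a\<bar> \<le> p * r powr (p - 1) * \<bar>b - a\<bar>"
    if ab: "a < b" "\<bar>a\<bar> \<le> r" "\<bar>b\<bar> \<le> r" for a b
  proof -
    obtain z where z: "a < z" "z < b" "abs_pow p b - abs_pow p a = (b - a) * abs_pow_deriv p z"
      using MVT2[OF ab(1), of "abs_pow p" "abs_pow_deriv p"] has_real_derivative_abs_pow[OF p] by blast
    have "\<bar>abs_pow_deriv p z\<bar> \<le> p * r powr (p - 1)"
      using z ab p by (intro abs_pow_deriv_le) auto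
    then show ?thesis using z(3) ab(1) by (simp add: abs_mult mult.commute mult_left_mono)
  qed
  consider "x < y" | "y < x" | "x = y" by linarith
  then show ?thesis
    by cases (use ordered[of x y] ordered[of y x] x y in \<open>auto simp: abs_minus_commute\<close>)
qed

lemma abs_pow_minus: "abs_pow p (-x) = abs_pow p x"
  by (simp add: abs_pow_def)

lemma has_real_derivative_abs_pow_comp[derivative_intros]:
  "p > 1 \<Longrightarrow> (f has_real_derivative D) (at x within S) \<Longrightarrow>
   ((\<lambda>x. abs_pow p (f x)) has_real_derivative abs_pow_deriv p (f x) * D) (at x within S)"
  by (rule DERIV_chain2[OF has_real_derivative_abs_pow])

lemma continuous_on_abs_pow[continuous_intros]:
  "p > 0 \<Longrightarrow> continuous_on S f \<Longrightarrow> continuous_on S (\<lambda>x. abs_pow p (f x))"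
  unfolding abs_pow_def by (intro continuous_on_powr') (auto intro!: continuous_intros)

lemma continuous_on_abs_pow_deriv[continuous_intros]:
  "p > 1 \<Longrightarrow> continuous_on S f \<Longrightarrow> continuous_on S (\<lambda>x. abs_pow_deriv p (f x))"
  using continuous_on_compose2[of UNIV "abs_pow_deriv p" S f]
  by (auto intro: continuous_at_imp_continuous_on isCont_abs_pow_deriv)

section \<open>The nonlinearity in Riemann invariants\<close>

text \<open>The nonlinearity \<open>|u\<^sub>t|\<^sup>p |u\<^sub>x|\<^sup>q\<close> written in the Riemann invariants \<open>a = u\<^sub>t + u\<^sub>x\<close>, \<open>b = u\<^sub>t - u\<^sub>x\<close>.\<close>

definition nonlin :: "real \<Rightarrow> real \<Rightarrow> real \<Rightarrow> real \<Rightarrow> real" where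
  "nonlin p q a b = abs_pow p ((a + b) / 2) * abs_pow q ((a - b) / 2)"

definition nonlin_d1 :: "real \<Rightarrow> real \<Rightarrow> real \<Rightarrow> real \<Rightarrow> real" where
  "nonlin_d1 p q a b = abs_pow_deriv p ((a + b) / 2) / 2 * abs_pow q ((a - b) / 2)
     + abs_pow p ((a + b) / 2) * abs_pow_deriv q ((a - b) / 2) / 2"

definition nonlin_d2 :: "real \<Rightarrow> real \<Rightarrow> real \<Rightarrow> real \<Rightarrow> real" where
  "nonlin_d2 p q a b = abs_pow_deriv p ((a + b) / 2) / 2 * abs_pow q ((a - b) / 2)
     - abs_pow p ((a + b) / 2) * abs_pow_deriv q ((a - b) / 2) / 2"

lemma nonlin_commute: "nonlin p q a b = nonlin p q b a"
proof -
  have "(b - a) / 2 = - ((a - b) / 2)" by (simp add: field_simps)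
  then show ?thesis unfolding nonlin_def by (simp only: abs_pow_minus add.commute)
qed

lemma has_real_derivative_nonlin[derivative_intros]:
  assumes "p > 1" "q > 1"
    and "(X has_real_derivative DX) (at x within S)" "(Y has_real_derivative DY) (at x within S)"
  shows "((\<lambda>x. nonlin p q (X x) (Y x)) has_real_derivative
           nonlin_d1 p q (X x) (Y x) * DX + nonlin_d2 p q (X x) (Y x) * DY) (at x within S)"
  unfolding nonlin_def using assms
  by (auto intro!: derivative_eq_intros simp: nonlin_d1_def nonlin_d2_def field_simps)

lemma continuous_on_nonlin[continuous_intros]:
  "p > 0 \<Longrightarrow> q > 0 \<Longrightarrow> continuous_on S f \<Longrightarrow> continuous_on S g \<Longrightarrow>
   continuous_on S (\<lambda>x. nonlin p q (f x) (g x))"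
  unfolding nonlin_def by (intro continuous_intros) auto

lemma continuous_on_nonlin_d1[continuous_intros]:
  "p > 1 \<Longrightarrow> q > 1 \<Longrightarrow> continuous_on S f \<Longrightarrow> continuous_on S g \<Longrightarrow>
   continuous_on S (\<lambda>x. nonlin_d1 p q (f x) (g x))"
  unfolding nonlin_d1_def by (intro continuous_intros) auto

lemma continuous_on_nonlin_d2[continuous_intros]:
  "p > 1 \<Longrightarrow> q > 1 \<Longrightarrow> continuous_on S f \<Longrightarrow> continuous_on S g \<Longrightarrow>
   continuous_on S (\<lambda>x. nonlin_d2 p q (f x) (g x))"
  unfolding nonlin_d2_def by (intro continuous_intros) auto

lemma powr_diff_one_mult: "(r::real) powr (p - 1) * r powr q = r powr (p + q - 1)"
  by (simp add: powr_add[symmetric] diff_add_eq)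

lemma abs_nonlin_le:
  assumes "p > 0" "q > 0" "\<bar>a\<bar> \<le> r" "\<bar>b\<bar> \<le> r"
  shows "\<bar>nonlin p q a b\<bar> \<le> r powr (p + q)"
proof -
  have "\<bar>abs_pow p ((a + b) / 2)\<bar> \<le> r powr p" "\<bar>abs_pow q ((a - b) / 2)\<bar> \<le> r powr q"
    using assms by (intro abs_pow_le; simp)+
  then have "\<bar>nonlin p q a b\<bar> \<le> r powr p * r powr q"
    unfolding nonlin_def abs_mult by (intro mult_mono) auto
  then show ?thesis by (simp add: powr_add)
qed

lemma abs_nonlin_d12_le:
  assumes p: "p > 1" and q: "q > 1" and "\<bar>a\<bar> \<le> r" "\<bar>b\<bar> \<le> r"
  shows "\<bar>nonlin_d1 p q a b\<bar> \<le> (p + q) * r powr (p + q - 1)"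
    and "\<bar>nonlin_d2 p q a b\<bar> \<le> (p + q) * r powr (p + q - 1)"
proof -
  define x where "x = (a + b) / 2"
  define y where "y = (a - b) / 2"
  have xy: "\<bar>x\<bar> \<le> r" "\<bar>y\<bar> \<le> r" using assms by (auto simp: x_def y_def)
  have "\<bar>abs_pow_deriv p x / 2 * abs_pow q y\<bar> \<le> p * r powr (p - 1) / 2 * r powr q"
    unfolding abs_mult abs_divide abs_numeral using xy p q
    by (intro mult_mono divide_right_mono abs_pow_le) (auto intro: abs_pow_deriv_le)
  also have "\<dots> = p / 2 * r powr (p + q - 1)"
    by (simp add: powr_diff_one_mult[symmetric])
  finally have first: "\<bar>abs_pow_deriv p x / 2 * abs_pow q y\<bar> \<le> p / 2 * r powr (p + q - 1)" .
  have "\<bar>abs_pow p x * abs_pow_deriv q y / 2\<bar> \<le> r powr p * (q * r powr (q - 1)) / 2"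
    unfolding abs_mult abs_divide abs_numeral using xy p q
    by (intro mult_mono divide_right_mono abs_pow_le) (auto intro: abs_pow_deriv_le)
  also have "\<dots> = q / 2 * r powr (p + q - 1)"
    using powr_diff_one_mult[of r q p] by (simp add: algebra_simps)
  finally have second: "\<bar>abs_pow p x * abs_pow_deriv q y / 2\<bar> \<le> q / 2 * r powr (p + q - 1)" .
  have "p / 2 * r powr (p + q - 1) + q / 2 * r powr (p + q - 1) \<le> (p + q) * r powr (p + q - 1)"
    using p q by (simp add: field_simps)
  then show "\<bar>nonlin_d1 p q a b\<bar> \<le> (p + q) * r powr (p + q - 1)"
    and "\<bar>nonlin_d2 p q a b\<bar> \<le> (p + q) * r powr (p + q - 1)"
    unfolding nonlin_d1_def nonlin_d2_def x_def[symmetric] y_def[symmetric] using first second by linarith+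
qed

lemma nonlin_lipschitz:
  assumes p: "p > 1" and q: "q > 1"
    and "\<bar>a\<bar> \<le> r" "\<bar>b\<bar> \<le> r" "\<bar>a'\<bar> \<le> r" "\<bar>b'\<bar> \<le> r"
  shows "\<bar>nonlin p q a b - nonlin p q a' b'\<bar> \<le> (p + q) * r powr (p + q - 1) * (\<bar>a - a'\<bar> + \<bar>b - b'\<bar>)"
proof -
  define x y x' y' where "x = (a + b) / 2" "y = (a - b) / 2" "x' = (a' + b') / 2" "y' = (a' - b') / 2"
  have bounds: "\<bar>x\<bar> \<le> r" "\<bar>y\<bar> \<le> r" "\<bar>x'\<bar> \<le> r" "\<bar>y'\<bar> \<le> r"
    using assms by (auto simp: x_y_x'_y'_def)
  have dist: "\<bar>x - x'\<bar> \<le> (\<bar>a - a'\<bar> + \<bar>b - b'\<bar>) / 2" "\<bar>y - y'\<bar> \<le> (\<bar>a - a'\<bar> + \<bar>b - b'\<bar>) / 2"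
    unfolding x_y_x'_y'_def by (simp_all add: field_simps abs_if)
  have "nonlin p q a b - nonlin p q a' b'
      = (abs_pow p x - abs_pow p x') * abs_pow q y + abs_pow p x' * (abs_pow q y - abs_pow q y')"
    by (simp add: nonlin_def x_y_x'_y'_def algebra_simps)
  also have "\<bar>\<dots>\<bar> \<le> \<bar>abs_pow p x - abs_pow p x'\<bar> * \<bar>abs_pow q y\<bar> + \<bar>abs_pow p x'\<bar> * \<bar>abs_pow q y - abs_pow q y'\<bar>"
    by (simp add: abs_mult[symmetric] abs_triangle_ineq)
  also have "\<dots> \<le> (p * r powr (p - 1) * \<bar>x - x'\<bar>) * r powr q + r powr p * (q * r powr (q - 1) * \<bar>y - y'\<bar>)"
    using bounds p q
    by (intro add_mono mult_mono abs_pow_lipschitz abs_pow_le) auto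
  also have "\<dots> = p * \<bar>x - x'\<bar> * (r powr (p - 1) * r powr q) + q * \<bar>y - y'\<bar> * (r powr (q - 1) * r powr p)"
    by (simp add: algebra_simps)
  also have "\<dots> = (p * \<bar>x - x'\<bar> + q * \<bar>y - y'\<bar>) * r powr (p + q - 1)"
    by (simp only: powr_diff_one_mult add.commute[of q p]) (simp add: algebra_simps)
  also have "\<dots> \<le> (p + q) * ((\<bar>a - a'\<bar> + \<bar>b - b'\<bar>) / 2) * r powr (p + q - 1)"
    using dist p q by (intro mult_right_mono) (auto simp: distrib_right intro!: add_mono mult_left_mono)
  also have "\<dots> \<le> (p + q) * r powr (p + q - 1) * (\<bar>a - a'\<bar> + \<bar>b - b'\<bar>)"
    using p q by (simp add: field_simps)
  finally show ?thesis .
qed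

abbreviation strip :: "real \<Rightarrow> (real \<times> real) set" where
  "strip T \<equiv> UNIV \<times> {0..T}"

lemma continuous_on_time_slice:
  assumes "continuous_on (strip T) F" "t \<le> T"
  shows "continuous_on {0..t} (\<lambda>s. F (x, s))"
  by (rule continuous_on_compose2[OF assms(1)]) (use assms(2) in \<open>auto intro!: continuous_intros\<close>)

lemma abs_integral_le_mult:
  fixes h :: "real \<Rightarrow> real"
  assumes "0 \<le> t" "t \<le> T" "continuous_on {0..t} h" "\<And>s. s \<in> {0..t} \<Longrightarrow> \<bar>h s\<bar> \<le> B"
  shows "\<bar>integral {0..t} h\<bar> \<le> T * B"
proof -
  have B: "B \<ge> 0" using assms(4)[of 0] assms(1) by auto
  have "\<bar>integral {0..t} h\<bar> \<le> B * (t - 0)"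
    using integral_bound[OF assms(1,3), of B] assms(4) by auto
  also have "\<dots> \<le> T * B" using B assms by (simp add: mult.commute mult_left_mono)
  finally show ?thesis .
qed

definition time_primitive :: "(real \<times> real \<Rightarrow> real) \<Rightarrow> real \<times> real \<Rightarrow> real" where
  "time_primitive H z = integral {0..snd z} (\<lambda>s. H (fst z, s))"

lemma continuous_on_time_primitive:
  assumes h: "continuous_on (strip T) h"
  shows "continuous_on (strip T) (time_primitive h)"
proof -
  \<comment> \<open>Rescaling to the fixed interval \<open>[0, 1]\<close> turns the moving domain into a parameter.\<close>
  have eq: "integral {0..snd z} (\<lambda>s. h (fst z, s)) = snd z * integral (cbox 0 1) (\<lambda>th. h (fst z, snd z * th))"
    if z: "z \<in> strip T" for z
  proof (cases "snd z = 0")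
    case False
    then have t: "snd z > 0" using z by auto
    have "(\<lambda>x. x / snd z) ` {0..snd z} = {0..1}"
      using t by (auto simp: image_iff divide_le_eq_1 intro!: bexI[of _ "snd z * _"])
    then have "integral {0..1} (\<lambda>th. h (fst z, snd z * th)) = (1 / snd z) * integral {0..snd z} (\<lambda>s. h (fst z, s))"
      using integral_stretch_real[of "snd z" 0 "snd z" "\<lambda>s. h (fst z, s)"] t by simp
    then show ?thesis using t by (simp add: box_real)
  qed simp
  have sub: "(\<lambda>w. (fst (fst w), snd (fst w) * snd w)) ` (strip T \<times> {0..1}) \<subseteq> strip T"
    by (auto intro: order_trans[OF mult_right_le_one_le])
  have "continuous_on (strip T \<times> {0..1}) (\<lambda>w. h (fst (fst w), snd (fst w) * snd w))"
    by (rule continuous_on_compose2[OF h _ sub]) (intro continuous_intros)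
  then have "continuous_on (strip T \<times> cbox 0 1) (\<lambda>(z, th). h (fst z, snd z * th))"
    by (simp add: case_prod_beta' box_real)
  then have "continuous_on (strip T) (\<lambda>z. snd z * integral (cbox 0 1) (\<lambda>th. h (fst z, snd z * th)))"
    by (intro continuous_intros integral_continuous_on_param)
  then show ?thesis
    unfolding time_primitive_def by (rule continuous_on_cong[THEN iffD1, rotated 2]) (use eq in auto)
qed

lemma abs_time_primitive_le:
  assumes "continuous_on (strip T) H" "\<And>z. z \<in> strip T \<Longrightarrow> \<bar>H z\<bar> \<le> B" "z \<in> strip T"
  shows "\<bar>time_primitive H z\<bar> \<le> T * B"
  unfolding time_primitive_def
  using assms by (intro abs_integral_le_mult continuous_on_time_slice) auto

lemma abs_time_primitive_diff_le:
  assumes "continuous_on (strip T) H" "continuous_on (strip T) H'"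
    and "\<And>z. z \<in> strip T \<Longrightarrow> \<bar>H z - H' z\<bar> \<le> B" "z \<in> strip T"
  shows "\<bar>time_primitive H z - time_primitive H' z\<bar> \<le> T * B"
proof -
  have "time_primitive H z - time_primitive H' z = time_primitive (\<lambda>w. H w - H' w) z"
    unfolding time_primitive_def using assms
    by (intro integral_diff[symmetric] integrable_continuous_real continuous_on_time_slice) auto
  also have "\<bar>\<dots>\<bar> \<le> T * B"
    using assms by (intro abs_time_primitive_le continuous_intros) auto
  finally show ?thesis .
qed

lemma has_real_derivative_time_primitive_time:
  assumes "continuous_on (strip T) H" "t \<in> {0..T}"
  shows "((\<lambda>t. time_primitive H (x, t)) has_real_derivative H (x, t)) (at t within {0..T})"
  unfolding time_primitive_def
  using integral_has_real_derivative[OF continuous_on_time_slice[OF assms(1) order_refl] assms(2)] by simp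

lemma has_real_derivative_time_primitive_space:
  assumes H: "continuous_on (strip T) H" and Hx: "continuous_on (strip T) Hx"
    and dH: "\<And>x s. s \<in> {0..T} \<Longrightarrow> ((\<lambda>x. H (x, s)) has_real_derivative Hx (x, s)) (at x)"
    and t: "t \<in> {0..T}"
  shows "((\<lambda>x. time_primitive H (x, t)) has_real_derivative time_primitive Hx (x, t)) (at x)"
proof -
  have sub: "UNIV \<times> cbox 0 t \<subseteq> strip T" using t by (auto simp: box_real)
  have "((\<lambda>x. integral (cbox 0 t) (\<lambda>s. H (x, s))) has_real_derivative integral (cbox 0 t) (\<lambda>s. Hx (x, s)))
      (at x within UNIV)"
  proof (rule leibniz_rule_field_derivative)
    show "continuous_on (UNIV \<times> cbox 0 t) (\<lambda>(x, s). Hx (x, s))"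
      using continuous_on_subset[OF Hx sub] by (simp add: case_prod_beta')
    show "(\<lambda>s. H (x, s)) integrable_on cbox 0 t" for x
      unfolding box_real using t by (intro integrable_continuous_real continuous_on_time_slice[OF H]) auto
  qed (use t dH in \<open>auto simp: box_real\<close>)
  then show ?thesis by (simp add: time_primitive_def box_real)
qed

lemma has_derivative_strip_of_partials:
  fixes F Fx Ft :: "real \<times> real \<Rightarrow> real"
  assumes Fx: "((\<lambda>x. F (x, t)) has_real_derivative Fx (x, t)) (at x)"
    and Ft: "\<And>x t. t \<in> {0..T} \<Longrightarrow> ((\<lambda>t. F (x, t)) has_real_derivative Ft (x, t)) (at t within {0..T})"
    and continuous_Ft: "continuous_on (strip T) Ft"
    and t: "t \<in> {0..T}"
  shows "(F has_derivative (\<lambda>(h, k). Fx (x, t) * h + Ft (x, t) * k)) (at (x, t) within strip T)"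
proof -
  have "((\<lambda>(x, y). F (x, y)) has_derivative
      (\<lambda>(h, k). Fx (x, t) * h + blinfun_apply (blinfun_mult_right (Ft (x, t))) k)) (at (x, t) within strip T)"
  proof (rule has_derivative_partialsI[where f="\<lambda>x y. F (x, y)"])
    show "((\<lambda>x. F (x, t)) has_derivative (*) (Fx (x, t))) (at x within UNIV)"
      using Fx by (simp add: has_field_derivative_def)
    show "((\<lambda>y. F (x, y)) has_derivative blinfun_apply (blinfun_mult_right (Ft (x, y)))) (at y within {0..T})"
      if "y \<in> {0..T}" for x y
      using Ft[OF that] by (simp add: has_field_derivative_def blinfun_mult_right.rep_eq)
    have "continuous_on (strip T) (\<lambda>z. blinfun_mult_right (Ft z))"
      by (rule continuous_on_compose2[OF bounded_linear.continuous_on[OF bounded_linear_blinfun_mult_right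
            continuous_on_id] continuous_Ft]) auto
    then show "continuous (at (x, t) within strip T) (\<lambda>(x, y). blinfun_mult_right (Ft (x, y)))"
      using t by (simp add: continuous_on_eq_continuous_within case_prod_beta')
  qed (use t in auto)
  then show ?thesis by (simp add: blinfun_mult_right.rep_eq mult.commute)
qed

lemma has_real_derivative_strip_slices:
  fixes F Fx Ft :: "real \<times> real \<Rightarrow> real"
  assumes D: "\<And>z. z \<in> strip T \<Longrightarrow> (F has_derivative (\<lambda>(h, k). Fx z * h + Ft z * k)) (at z within strip T)"
    and t: "t \<in> {0..T}"
  shows "((\<lambda>x. F (x, t)) has_real_derivative Fx (x, t)) (at x)"
    and "((\<lambda>s. F (x, s)) has_real_derivative Ft (x, t)) (at t within {0..T})"
proof -
  have horizontal: "((\<lambda>x. (x, t)) has_derivative (\<lambda>h. (h, 0))) (at x)"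
    by (auto intro!: derivative_eq_intros)
  have "((\<lambda>x. F (x, t)) has_derivative (\<lambda>h. (\<lambda>(h, k). Fx (x, t) * h + Ft (x, t) * k) (h, 0))) (at x)"
    by (rule has_derivative_in_compose2[OF D _ _ horizontal]) (use t in auto)
  then show "((\<lambda>x. F (x, t)) has_real_derivative Fx (x, t)) (at x)"
    by (simp add: has_field_derivative_def mult_commute_abs)
  have vertical: "((\<lambda>s. (x, s)) has_derivative (\<lambda>k. (0, k))) (at t within {0..T})"
    by (auto intro!: derivative_eq_intros)
  have "((\<lambda>s. F (x, s)) has_derivative (\<lambda>k. (\<lambda>(h, k). Fx (x, t) * h + Ft (x, t) * k) (0, k))) (at t within {0..T})"
    by (rule has_derivative_in_compose2[OF D _ _ vertical]) (use t in auto)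
  then show "((\<lambda>s. F (x, s)) has_real_derivative Ft (x, t)) (at t within {0..T})"
    by (simp add: has_field_derivative_def mult_commute_abs)
qed

lemma has_real_derivative_time_primitive_exact:
  fixes v w vx :: "real \<times> real \<Rightarrow> real"
  assumes v: "continuous_on (strip T) v" and vx: "continuous_on (strip T) vx"
    and dv: "\<And>x s. s \<in> {0..T} \<Longrightarrow> ((\<lambda>x. v (x, s)) has_real_derivative vx (x, s)) (at x)"
    and dw: "\<And>x s. s \<in> {0..T} \<Longrightarrow> ((\<lambda>s. w (x, s)) has_real_derivative vx (x, s)) (at s within {0..T})"
    and t: "t \<in> {0..T}"
  shows "((\<lambda>x. time_primitive v (x, t)) has_real_derivative w (x, t) - w (x, 0)) (at x)"
proof -
  have "((\<lambda>s. vx (x, s)) has_integral w (x, t) - w (x, 0)) {0..t}"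
  proof (rule fundamental_theorem_of_calculus)
    show "((\<lambda>s. w (x, s)) has_vector_derivative vx (x, s)) (at s within {0..t})" if "s \<in> {0..t}" for s
      using dw[of s x] that t
      by (auto simp: has_real_derivative_iff_has_vector_derivative intro: has_vector_derivative_within_subset)
  qed (use t in auto)
  then have "time_primitive vx (x, t) = w (x, t) - w (x, 0)"
    by (simp add: time_primitive_def integral_unique)
  then show ?thesis
    using has_real_derivative_time_primitive_space[OF v vx dv t, of x] by simp
qed

definition shear :: "real \<Rightarrow> real \<times> real \<Rightarrow> real \<times> real" where
  "shear k z = (fst z + k * snd z, snd z)"

lemma shear_in_strip [simp]: "shear k z \<in> strip T \<longleftrightarrow> z \<in> strip T"
  by (cases z) (simp add: shear_def)

lemma continuous_on_shear:
  assumes "continuous_on (strip T) Y"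
  shows "continuous_on (strip T) (\<lambda>z. Y (shear k z))"
  unfolding shear_def by (rule continuous_on_compose2[OF assms]) (auto intro!: continuous_intros)

lemma shear_shear [simp]: "shear c (shear d z) = shear (c + d) z"
  by (simp add: shear_def algebra_simps)

lemma shear_zero_time [simp]: "shear c (x, 0) = (x, 0)"
  by (simp add: shear_def)

lemma has_derivative_shear_comp:
  fixes F D1 D2 :: "real \<times> real \<Rightarrow> real"
  assumes "\<And>z. z \<in> strip T \<Longrightarrow> (F has_derivative (\<lambda>(h, k). D1 z * h + D2 z * k)) (at z within strip T)"
    and z: "z \<in> strip T"
  shows "((\<lambda>z. F (shear c z)) has_derivative
          (\<lambda>(h, k). D1 (shear c z) * h + (c * D1 (shear c z) + D2 (shear c z)) * k)) (at z within strip T)"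
proof -
  have lin: "(shear c has_derivative shear c) (at z within strip T)"
    unfolding shear_def by (auto intro!: derivative_eq_intros)
  have "((\<lambda>z. F (shear c z)) has_derivative
      (\<lambda>y. (\<lambda>(h, k). D1 (shear c z) * h + D2 (shear c z) * k) (shear c y))) (at z within strip T)"
    by (rule has_derivative_in_compose2[OF assms(1) _ z lin]) (auto simp: shear_def)
  then show ?thesis by (simp add: shear_def case_prod_beta' algebra_simps)
qed

lemma uniformly_Cauchy_on_geometric:
  fixes f :: "nat \<Rightarrow> 'a \<Rightarrow> real"
  assumes step: "\<And>n z. z \<in> X \<Longrightarrow> \<bar>f (Suc n) z - f n z\<bar> \<le> C * (1/2)^n" and C: "C \<ge> 0"
  shows "uniformly_Cauchy_on X f"
  unfolding uniformly_Cauchy_on_def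
proof (intro allI impI)
  have tail: "\<bar>f (n + k) z - f n z\<bar> \<le> 2 * C * (1/2)^n - 2 * C * (1/2)^(n + k)" if z: "z \<in> X" for n k z
  proof (induction k)
    case (Suc k)
    then show ?case using step[OF z, of "n + k"] by simp
  qed simp
  fix e :: real assume e: "e > 0"
  obtain N where N: "(1/2::real)^N < e / (4 * C + 1)"
    using real_arch_pow_inv[of "e / (4 * C + 1)" "1/2"] e C by auto
  have "4 * C * (1/2::real)^N \<le> (4 * C + 1) * (1/2)^N" by (simp add: mult_right_mono)
  also have "\<dots> < e" using N C by (simp add: field_simps)
  finally have small: "4 * C * (1/2::real)^N < e" .
  show "\<exists>M. \<forall>x\<in>X. \<forall>m\<ge>M. \<forall>n\<ge>M. dist (f m x) (f n x) < e"
  proof (intro exI[of _ N] ballI allI impI)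
    fix x m n assume x: "x \<in> X" and mn: "N \<le> m" "N \<le> n"
    have "0 \<le> 2 * C * (1/2::real)^m" "0 \<le> 2 * C * (1/2::real)^n" using C by simp_all
    then have "\<bar>f m x - f N x\<bar> \<le> 2 * C * (1/2)^N" "\<bar>f n x - f N x\<bar> \<le> 2 * C * (1/2)^N"
      using tail[OF x, of N "m - N"] tail[OF x, of N "n - N"] mn by simp_all
    then show "dist (f m x) (f n x) < e" unfolding dist_real_def using small by linarith
  qed
qed

lemma uniformly_Cauchy_on_compose2:
  fixes h :: "real \<Rightarrow> real \<Rightarrow> real" and X :: "nat \<Rightarrow> 'a \<Rightarrow> real" and Y :: "nat \<Rightarrow> 'b \<Rightarrow> real"
  assumes h: "continuous_on ({-r..r} \<times> {-r..r}) (\<lambda>w. h (fst w) (snd w))"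
    and X: "uniformly_Cauchy_on S X" and Y: "uniformly_Cauchy_on S' Y"
    and bX: "\<And>n z. z \<in> S \<Longrightarrow> \<bar>X n z\<bar> \<le> r" and bY: "\<And>n z. z \<in> S' \<Longrightarrow> \<bar>Y n z\<bar> \<le> r"
  shows "uniformly_Cauchy_on (S \<times> S') (\<lambda>n z. h (X n (fst z)) (Y n (snd z)))"
  unfolding uniformly_Cauchy_on_def
proof (intro allI impI)
  fix e :: real assume e: "e > 0"
  obtain d where d: "d > 0" and close: "\<And>w w'. w \<in> {-r..r} \<times> {-r..r} \<Longrightarrow> w' \<in> {-r..r} \<times> {-r..r} \<Longrightarrow>
      dist w' w < d \<Longrightarrow> dist (h (fst w') (snd w')) (h (fst w) (snd w)) < e"
    using compact_uniformly_continuous[OF h] e unfolding uniformly_continuous_on_def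
    by (metis compact_Icc compact_Times)
  obtain N1 where N1: "\<And>z m n. z \<in> S \<Longrightarrow> m \<ge> N1 \<Longrightarrow> n \<ge> N1 \<Longrightarrow> dist (X m z) (X n z) < d / 2"
    using X d unfolding uniformly_Cauchy_on_def by (meson half_gt_zero)
  obtain N2 where N2: "\<And>z m n. z \<in> S' \<Longrightarrow> m \<ge> N2 \<Longrightarrow> n \<ge> N2 \<Longrightarrow> dist (Y m z) (Y n z) < d / 2"
    using Y d unfolding uniformly_Cauchy_on_def by (meson half_gt_zero)
  show "\<exists>N. \<forall>z\<in>S \<times> S'. \<forall>m\<ge>N. \<forall>n\<ge>N. dist (h (X m (fst z)) (Y m (snd z))) (h (X n (fst z)) (Y n (snd z))) < e"
  proof (intro exI[of _ "max N1 N2"] ballI allI impI)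
    fix z m n assume z: "z \<in> S \<times> S'" and mn: "max N1 N2 \<le> m" "max N1 N2 \<le> n"
    let ?w = "\<lambda>n. (X n (fst z), Y n (snd z))"
    have "dist (?w n) (?w m) \<le> \<bar>X n (fst z) - X m (fst z)\<bar> + \<bar>Y n (snd z) - Y m (snd z)\<bar>"
      unfolding dist_Pair_Pair dist_real_def using sqrt_sum_squares_le_sum_abs by simp
    also have "\<dots> < d" using N1[of "fst z" n m] N2[of "snd z" n m] z mn by (force simp: dist_real_def)
    finally have "dist (?w n) (?w m) < d" .
    moreover have "?w n \<in> {-r..r} \<times> {-r..r}" "?w m \<in> {-r..r} \<times> {-r..r}"
      using bX[of "fst z" n] bX[of "fst z" m] bY[of "snd z" n] bY[of "snd z" m] z
      by (auto simp: abs_le_iff)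
    ultimately show "dist (h (X m (fst z)) (Y m (snd z))) (h (X n (fst z)) (Y n (snd z))) < e"
      using close[of "?w m" "?w n"] by (simp add: dist_commute)
  qed
qed

lemma has_real_derivative_uniform_limit_slice:
  fixes X DX :: "nat \<Rightarrow> real \<times> real \<Rightarrow> real"
  assumes X: "uniform_limit (strip T) X X0 sequentially"
    and DX: "uniform_limit (strip T) DX DX0 sequentially"
    and d: "\<And>n x. ((\<lambda>x. X n (x, t)) has_real_derivative DX n (x, t)) (at x)"
    and t: "t \<in> {0..T}"
  shows "((\<lambda>x. X0 (x, t)) has_real_derivative DX0 (x, t)) (at x)"
proof -
  have mem: "(y, t) \<in> strip T" for y using t by auto
  have "\<exists>g. \<forall>y\<in>UNIV. (\<lambda>n. X n (y, t)) \<longlonglongrightarrow> g y \<and> (g has_derivative (*) (DX0 (y, t))) (at y within UNIV)"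
  proof (rule has_derivative_sequence[where f'="\<lambda>n y. (*) (DX n (y, t))"])
    show "((\<lambda>y. X n (y, t)) has_derivative (*) (DX n (y, t))) (at y within UNIV)" for n y
      using d by (simp add: has_field_derivative_def)
    show "(\<lambda>n. X n (x, t)) \<longlonglongrightarrow> X0 (x, t)" by (rule tendsto_uniform_limitI[OF X mem])
    fix e :: real assume e: "e > 0"
    have "\<forall>\<^sub>F n in sequentially. \<forall>z\<in>strip T. dist (DX n z) (DX0 z) < e"
      using DX e unfolding uniform_limit_iff by auto
    then show "\<forall>\<^sub>F n in sequentially. \<forall>y\<in>UNIV. \<forall>h. norm (DX n (y, t) * h - DX0 (y, t) * h) \<le> e * norm h"
    proof eventually_elim
      case (elim n)
      have "\<bar>DX n (y, t) - DX0 (y, t)\<bar> * \<bar>h\<bar> \<le> e * \<bar>h\<bar>" for y h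
        using elim mem[of y] by (intro mult_right_mono) (auto simp: dist_real_def less_imp_le)
      then show ?case by (simp add: left_diff_distrib[symmetric] abs_mult)
    qed
  qed auto
  then obtain g where g: "\<And>y. (\<lambda>n. X n (y, t)) \<longlonglongrightarrow> g y" "\<And>y. (g has_derivative (*) (DX0 (y, t))) (at y)"
    by auto
  have "g = (\<lambda>y. X0 (y, t))"
    using LIMSEQ_unique[OF g(1) tendsto_uniform_limitI[OF X mem]] by auto
  then show ?thesis using g(2)[of x] by (simp add: has_field_derivative_def)
qed

section \<open>Duhamel operators along characteristics\<close>

text \<open>
  \<open>duhamel\<close> is the integral form of \<open>\<partial>\<^sub>t X = nonlin (X, Y \<circ> shear k)\<close>, \<open>X(\<cdot>, 0) = c\<close>, and
  \<open>duhamel_dx\<close> its formal space derivative. With \<open>k = \<mp>2\<close>, \<open>Y \<circ> shear k\<close> evaluates the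
  other Riemann invariant on the characteristic through the point where \<open>X\<close> is evaluated.
\<close>

definition duhamel ::
  "real \<Rightarrow> real \<Rightarrow> real \<Rightarrow> (real \<Rightarrow> real) \<Rightarrow> (real \<times> real \<Rightarrow> real) \<Rightarrow> (real \<times> real \<Rightarrow> real)
   \<Rightarrow> real \<times> real \<Rightarrow> real" where
  "duhamel p q k c X Y z = c (fst z) + time_primitive (\<lambda>w. nonlin p q (X w) (Y (shear k w))) z"

definition duhamel_dx ::
  "real \<Rightarrow> real \<Rightarrow> real \<Rightarrow> (real \<Rightarrow> real) \<Rightarrow> (real \<times> real \<Rightarrow> real) \<Rightarrow> (real \<times> real \<Rightarrow> real)
   \<Rightarrow> (real \<times> real \<Rightarrow> real) \<Rightarrow> (real \<times> real \<Rightarrow> real) \<Rightarrow> real \<times> real \<Rightarrow> real" where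
  "duhamel_dx p q k c X Y DX DY z = c (fst z) + time_primitive (\<lambda>w.
      nonlin_d1 p q (X w) (Y (shear k w)) * DX w + nonlin_d2 p q (X w) (Y (shear k w)) * DY (shear k w)) z"

lemma duhamel_zero_time [simp]: "duhamel p q k c X Y (x, 0) = c x"
  by (simp add: duhamel_def time_primitive_def)

lemma abs_bilinear_le:
  fixes g1 g2 a b L B :: real
  assumes "\<bar>g1\<bar> \<le> L" "\<bar>g2\<bar> \<le> L" "\<bar>a\<bar> \<le> B" "\<bar>b\<bar> \<le> B"
  shows "\<bar>g1 * a + g2 * b\<bar> \<le> 2 * L * B"
proof -
  have "\<bar>g1 * a\<bar> \<le> L * B" "\<bar>g2 * b\<bar> \<le> L * B"
    unfolding abs_mult using assms by (auto intro!: mult_mono)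
  then show ?thesis using abs_triangle_ineq[of "g1 * a" "g2 * b"] by simp
qed

lemma abs_bilinear_diff_le:
  fixes g1 g2 g1' g2' a b a' b' L d B w :: real
  assumes "\<bar>g1\<bar> \<le> L" "\<bar>g2\<bar> \<le> L" "\<bar>a - a'\<bar> \<le> d" "\<bar>b - b'\<bar> \<le> d" "\<bar>a'\<bar> \<le> B" "\<bar>b'\<bar> \<le> B"
    "\<bar>g1 - g1'\<bar> \<le> w" "\<bar>g2 - g2'\<bar> \<le> w"
  shows "\<bar>g1 * a + g2 * b - (g1' * a' + g2' * b')\<bar> \<le> 2 * L * d + 2 * w * B"
proof -
  have "g1 * a + g2 * b - (g1' * a' + g2' * b') = (g1 * (a - a') + g2 * (b - b')) + ((g1 - g1') * a' + (g2 - g2') * b')"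
    by (simp add: algebra_simps)
  then show ?thesis
    using abs_bilinear_le[OF assms(1-4)] abs_bilinear_le[OF assms(7,8,5,6)]
      abs_triangle_ineq[of "g1 * (a - a') + g2 * (b - b')" "(g1 - g1') * a' + (g2 - g2') * b'"]
    by linarith
qed

context
  fixes p q T k :: real
  assumes p: "p > 1" and q: "q > 1"
begin

lemma continuous_on_duhamel_integrand:
  "continuous_on (strip T) X \<Longrightarrow> continuous_on (strip T) Y \<Longrightarrow>
   continuous_on (strip T) (\<lambda>w. nonlin p q (X w) (Y (shear k w)))"
  using p q continuous_on_shear[of T Y] by (intro continuous_intros) auto

lemma continuous_on_duhamel_dx_integrand:
  "continuous_on (strip T) X \<Longrightarrow> continuous_on (strip T) Y \<Longrightarrow>
   continuous_on (strip T) DX \<Longrightarrow> continuous_on (strip T) DY \<Longrightarrow>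
   continuous_on (strip T) (\<lambda>w. nonlin_d1 p q (X w) (Y (shear k w)) * DX w
                                 + nonlin_d2 p q (X w) (Y (shear k w)) * DY (shear k w))"
  using p q continuous_on_shear[of T Y] continuous_on_shear[of T DY] by (intro continuous_intros) auto

lemma continuous_on_duhamel:
  assumes "continuous_on UNIV c" "continuous_on (strip T) X" "continuous_on (strip T) Y"
  shows "continuous_on (strip T) (duhamel p q k c X Y)"
  unfolding duhamel_def using assms
  by (intro continuous_intros continuous_on_time_primitive continuous_on_duhamel_integrand
      continuous_on_compose2[OF assms(1)]) auto

lemma continuous_on_duhamel_dx:
  assumes "continuous_on UNIV c" "continuous_on (strip T) X" "continuous_on (strip T) Y"
    "continuous_on (strip T) DX" "continuous_on (strip T) DY"
  shows "continuous_on (strip T) (duhamel_dx p q k c X Y DX DY)"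
  unfolding duhamel_dx_def using assms
  by (intro continuous_intros continuous_on_time_primitive continuous_on_duhamel_dx_integrand
      continuous_on_compose2[OF assms(1)]) auto

lemma abs_duhamel_le:
  assumes "continuous_on (strip T) X" "continuous_on (strip T) Y"
    and "\<And>z. z \<in> strip T \<Longrightarrow> \<bar>X z\<bar> \<le> r" "\<And>z. z \<in> strip T \<Longrightarrow> \<bar>Y z\<bar> \<le> r"
    and "\<And>x. \<bar>c x\<bar> \<le> M" "z \<in> strip T"
  shows "\<bar>duhamel p q k c X Y z\<bar> \<le> M + T * r powr (p + q)"
proof -
  have "\<bar>time_primitive (\<lambda>w. nonlin p q (X w) (Y (shear k w))) z\<bar> \<le> T * r powr (p + q)"
    using assms p q by (intro abs_time_primitive_le abs_nonlin_le continuous_on_duhamel_integrand) auto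
  then show ?thesis using assms(5)[of "fst z"] by (simp add: duhamel_def)
qed

lemma abs_duhamel_dx_le:
  assumes "continuous_on (strip T) X" "continuous_on (strip T) Y"
    "continuous_on (strip T) DX" "continuous_on (strip T) DY"
    and "\<And>z. z \<in> strip T \<Longrightarrow> \<bar>X z\<bar> \<le> r" "\<And>z. z \<in> strip T \<Longrightarrow> \<bar>Y z\<bar> \<le> r"
    and "\<And>z. z \<in> strip T \<Longrightarrow> \<bar>DX z\<bar> \<le> B" "\<And>z. z \<in> strip T \<Longrightarrow> \<bar>DY z\<bar> \<le> B"
    and "\<And>x. \<bar>c x\<bar> \<le> M" "z \<in> strip T"
  shows "\<bar>duhamel_dx p q k c X Y DX DY z\<bar> \<le> M + T * (2 * ((p + q) * r powr (p + q - 1)) * B)"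
proof -
  have "\<bar>time_primitive (\<lambda>w. nonlin_d1 p q (X w) (Y (shear k w)) * DX w
           + nonlin_d2 p q (X w) (Y (shear k w)) * DY (shear k w)) z\<bar>
        \<le> T * (2 * ((p + q) * r powr (p + q - 1)) * B)"
    using assms p q
    by (intro abs_time_primitive_le abs_bilinear_le abs_nonlin_d12_le continuous_on_duhamel_dx_integrand) auto
  then show ?thesis using assms(9)[of "fst z"] by (simp add: duhamel_dx_def)
qed

lemma duhamel_lipschitz:
  assumes "continuous_on (strip T) X" "continuous_on (strip T) Y"
    "continuous_on (strip T) X'" "continuous_on (strip T) Y'"
    and "\<And>z. z \<in> strip T \<Longrightarrow> \<bar>X z\<bar> \<le> r" "\<And>z. z \<in> strip T \<Longrightarrow> \<bar>Y z\<bar> \<le> r"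
    and "\<And>z. z \<in> strip T \<Longrightarrow> \<bar>X' z\<bar> \<le> r" "\<And>z. z \<in> strip T \<Longrightarrow> \<bar>Y' z\<bar> \<le> r"
    and dX: "\<And>z. z \<in> strip T \<Longrightarrow> \<bar>X z - X' z\<bar> \<le> d"
    and dY: "\<And>z. z \<in> strip T \<Longrightarrow> \<bar>Y z - Y' z\<bar> \<le> d"
    and z: "z \<in> strip T"
  shows "\<bar>duhamel p q k c X Y z - duhamel p q k c X' Y' z\<bar> \<le> T * ((p + q) * r powr (p + q - 1) * (2 * d))"
proof -
  have "\<bar>nonlin p q (X w) (Y (shear k w)) - nonlin p q (X' w) (Y' (shear k w))\<bar>
        \<le> (p + q) * r powr (p + q - 1) * (2 * d)" if w: "w \<in> strip T" for w
  proof -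
    have "\<bar>nonlin p q (X w) (Y (shear k w)) - nonlin p q (X' w) (Y' (shear k w))\<bar>
        \<le> (p + q) * r powr (p + q - 1) * (\<bar>X w - X' w\<bar> + \<bar>Y (shear k w) - Y' (shear k w)\<bar>)"
      by (rule nonlin_lipschitz[OF p q]) (use assms(5-8) w in simp_all)
    also have "\<dots> \<le> (p + q) * r powr (p + q - 1) * (2 * d)"
      using dX[OF w] dY[of "shear k w"] w p q by (intro mult_left_mono) auto
    finally show ?thesis .
  qed
  then show ?thesis
    unfolding duhamel_def using assms
    by simp (intro abs_time_primitive_diff_le continuous_on_duhamel_integrand; simp)
qed

lemma duhamel_dx_diff_le:
  assumes "continuous_on (strip T) X" "continuous_on (strip T) Y"
    "continuous_on (strip T) DX" "continuous_on (strip T) DY"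
    "continuous_on (strip T) X'" "continuous_on (strip T) Y'"
    "continuous_on (strip T) DX'" "continuous_on (strip T) DY'"
    and "\<And>z. z \<in> strip T \<Longrightarrow> \<bar>X z\<bar> \<le> r" "\<And>z. z \<in> strip T \<Longrightarrow> \<bar>Y z\<bar> \<le> r"
    and "\<And>z. z \<in> strip T \<Longrightarrow> \<bar>DX' z\<bar> \<le> B" "\<And>z. z \<in> strip T \<Longrightarrow> \<bar>DY' z\<bar> \<le> B"
    and "\<And>z. z \<in> strip T \<Longrightarrow> \<bar>DX z - DX' z\<bar> \<le> d" "\<And>z. z \<in> strip T \<Longrightarrow> \<bar>DY z - DY' z\<bar> \<le> d"
    and "\<And>w. w \<in> strip T \<Longrightarrow>
           \<bar>nonlin_d1 p q (X w) (Y (shear k w)) - nonlin_d1 p q (X' w) (Y' (shear k w))\<bar> \<le> e"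
    and "\<And>w. w \<in> strip T \<Longrightarrow>
           \<bar>nonlin_d2 p q (X w) (Y (shear k w)) - nonlin_d2 p q (X' w) (Y' (shear k w))\<bar> \<le> e"
    and z: "z \<in> strip T"
  shows "\<bar>duhamel_dx p q k c X Y DX DY z - duhamel_dx p q k c X' Y' DX' DY' z\<bar>
           \<le> T * (2 * ((p + q) * r powr (p + q - 1)) * d + 2 * e * B)"
  unfolding duhamel_dx_def using assms p q
  by simp (intro abs_time_primitive_diff_le abs_bilinear_diff_le abs_nonlin_d12_le
      continuous_on_duhamel_dx_integrand; simp)

lemma has_real_derivative_duhamel_space:
  assumes t: "t \<in> {0..T}"
    and cX: "continuous_on (strip T) X" and cY: "continuous_on (strip T) Y"
    and cDX: "continuous_on (strip T) DX" and cDY: "continuous_on (strip T) DY"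
    and dc: "\<And>x. (c has_real_derivative c' x) (at x)"
    and dX: "\<And>x s. s \<in> {0..T} \<Longrightarrow> ((\<lambda>x. X (x, s)) has_real_derivative DX (x, s)) (at x)"
    and dY: "\<And>x s. s \<in> {0..T} \<Longrightarrow> ((\<lambda>x. Y (x, s)) has_real_derivative DY (x, s)) (at x)"
  shows "((\<lambda>x. duhamel p q k c X Y (x, t)) has_real_derivative duhamel_dx p q k c' X Y DX DY (x, t)) (at x)"
proof -
  have "((\<lambda>x. Y (shear k (x, s))) has_real_derivative DY (shear k (x, s))) (at x)" if "s \<in> {0..T}" for x s
  proof -
    have "((\<lambda>x. x + k * s) has_real_derivative 1) (at x)"
      by (auto intro!: derivative_eq_intros)
    from DERIV_chain2[OF dY[OF that] this] show ?thesis by (simp add: shear_def)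
  qed
  then have "((\<lambda>x. time_primitive (\<lambda>w. nonlin p q (X w) (Y (shear k w))) (x, t)) has_real_derivative
      time_primitive (\<lambda>w. nonlin_d1 p q (X w) (Y (shear k w)) * DX w
                           + nonlin_d2 p q (X w) (Y (shear k w)) * DY (shear k w)) (x, t)) (at x)"
    using p q dX
    by (intro has_real_derivative_time_primitive_space[OF continuous_on_duhamel_integrand[OF cX cY]
          continuous_on_duhamel_dx_integrand[OF cX cY cDX cDY] _ t] has_real_derivative_nonlin) auto
  then show ?thesis
    unfolding duhamel_def duhamel_dx_def using dc by (auto intro!: derivative_eq_intros)
qed

lemma has_real_derivative_duhamel_time:
  assumes "t \<in> {0..T}" "continuous_on (strip T) X" "continuous_on (strip T) Y"
  shows "((\<lambda>t. duhamel p q k c X Y (x, t)) has_real_derivative nonlin p q (X (x, t)) (Y (shear k (x, t))))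
           (at t within {0..T})"
  unfolding duhamel_def using assms
  by (auto intro!: derivative_eq_intros has_real_derivative_time_primitive_time continuous_on_duhamel_integrand)

end

lemma duhamel_fixpoint_has_derivative:
  assumes p: "p > 1" and q: "q > 1"
    and A: "continuous_on (strip T) A" and B: "continuous_on (strip T) B"
    and fixpoint: "\<And>z. z \<in> strip T \<Longrightarrow> A z = duhamel p q k c A B z"
    and Ax: "\<And>t x. t \<in> {0..T} \<Longrightarrow> ((\<lambda>x. A (x, t)) has_real_derivative P (x, t)) (at x)"
    and z: "z \<in> strip T"
  shows "(A has_derivative (\<lambda>(h, l). P z * h + nonlin p q (A z) (B (shear k z)) * l)) (at z within strip T)"
proof -
  have At: "((\<lambda>t. A (x, t)) has_real_derivative nonlin p q (A (x, t)) (B (shear k (x, t)))) (at t within {0..T})"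
    if t: "t \<in> {0..T}" for x t
    by (rule has_field_derivative_transform_within[OF has_real_derivative_duhamel_time[OF p q t A B],
          where d=1]) (use t fixpoint in auto)
  obtain x t where "z = (x, t)" "t \<in> {0..T}" using z by auto
  then show ?thesis
    using has_derivative_strip_of_partials[where F=A and Fx=P and Ft="\<lambda>w. nonlin p q (A w) (B (shear k w))",
        OF Ax At continuous_on_duhamel_integrand[OF p q A B]] by simp
qed

section \<open>Picard iteration\<close>

locale char_iteration =
  fixes p q T M M' :: real and a0 b0 da0 db0 :: "real \<Rightarrow> real"
  assumes p: "p > 1" and q: "q > 1" and T: "T \<ge> 0" and M: "M > 0" and M': "M' \<ge> 0"
    and da0: "\<And>x. (a0 has_real_derivative da0 x) (at x)"
    and db0: "\<And>x. (b0 has_real_derivative db0 x) (at x)"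
    and continuous_da0: "continuous_on UNIV da0" and continuous_db0: "continuous_on UNIV db0"
    and bounded_a0: "\<And>x. \<bar>a0 x\<bar> \<le> M" and bounded_b0: "\<And>x. \<bar>b0 x\<bar> \<le> M"
    and bounded_da0: "\<And>x. \<bar>da0 x\<bar> \<le> M'" and bounded_db0: "\<And>x. \<bar>db0 x\<bar> \<le> M'"
    and small_time: "T * (2 * M) powr (p + q) \<le> M"
    and small_time_lipschitz: "T * ((p + q) * (2 * M) powr (p + q - 1)) \<le> 1/4"
begin

definition lip :: real where
  "lip = (p + q) * (2 * M) powr (p + q - 1)"

lemma T_lip_le: "T * lip \<le> 1/4"
  using small_time_lipschitz by (simp add: lip_def)

lemma continuous_a0: "continuous_on UNIV a0" and continuous_b0: "continuous_on UNIV b0"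
  using da0 db0 by (auto intro!: continuous_at_imp_continuous_on DERIV_isCont)

primrec iter :: "nat \<Rightarrow> (real \<times> real \<Rightarrow> real) \<times> (real \<times> real \<Rightarrow> real) \<times> (real \<times> real \<Rightarrow> real) \<times> (real \<times> real \<Rightarrow> real)" where
  "iter 0 = (\<lambda>z. 0, \<lambda>z. 0, \<lambda>z. 0, \<lambda>z. 0)"
| "iter (Suc n) = (case iter n of (A, B, P, Q) \<Rightarrow>
     (duhamel p q (-2) a0 A B, duhamel p q 2 b0 B A,
      duhamel_dx p q (-2) da0 A B P Q, duhamel_dx p q 2 db0 B A Q P))"

definition "iterA n = fst (iter n)"
definition "iterB n = fst (snd (iter n))"
definition "iterP n = fst (snd (snd (iter n)))"
definition "iterQ n = snd (snd (snd (iter n)))"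

lemma iter_0: "iterA 0 = (\<lambda>z. 0)" "iterB 0 = (\<lambda>z. 0)" "iterP 0 = (\<lambda>z. 0)" "iterQ 0 = (\<lambda>z. 0)"
  by (simp_all add: iterA_def iterB_def iterP_def iterQ_def)

lemma iter_Suc:
  "iterA (Suc n) = duhamel p q (-2) a0 (iterA n) (iterB n)"
  "iterB (Suc n) = duhamel p q 2 b0 (iterB n) (iterA n)"
  "iterP (Suc n) = duhamel_dx p q (-2) da0 (iterA n) (iterB n) (iterP n) (iterQ n)"
  "iterQ (Suc n) = duhamel_dx p q 2 db0 (iterB n) (iterA n) (iterQ n) (iterP n)"
  by (simp_all add: iterA_def iterB_def iterP_def iterQ_def split: prod.split)

definition admissible ::
  "(real \<times> real \<Rightarrow> real) \<Rightarrow> (real \<times> real \<Rightarrow> real) \<Rightarrow> (real \<times> real \<Rightarrow> real) \<Rightarrow> (real \<times> real \<Rightarrow> real) \<Rightarrow> bool"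
where
  "admissible A B P Q \<longleftrightarrow>
     continuous_on (strip T) A \<and> continuous_on (strip T) B \<and>
     continuous_on (strip T) P \<and> continuous_on (strip T) Q \<and>
     (\<forall>z\<in>strip T. \<bar>A z\<bar> \<le> 2 * M \<and> \<bar>B z\<bar> \<le> 2 * M \<and> \<bar>P z\<bar> \<le> 2 * M' \<and> \<bar>Q z\<bar> \<le> 2 * M') \<and>
     (\<forall>x. \<forall>s\<in>{0..T}. ((\<lambda>x. A (x, s)) has_real_derivative P (x, s)) (at x) \<and>
                      ((\<lambda>x. B (x, s)) has_real_derivative Q (x, s)) (at x))"

lemma admissible_step:
  assumes "admissible A B P Q"
  shows "admissible (duhamel p q (-2) a0 A B) (duhamel p q 2 b0 B A)
           (duhamel_dx p q (-2) da0 A B P Q) (duhamel_dx p q 2 db0 B A Q P)"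
proof -
  have c: "continuous_on (strip T) A" "continuous_on (strip T) B"
      "continuous_on (strip T) P" "continuous_on (strip T) Q"
    and bA: "\<And>z. z \<in> strip T \<Longrightarrow> \<bar>A z\<bar> \<le> 2 * M" and bB: "\<And>z. z \<in> strip T \<Longrightarrow> \<bar>B z\<bar> \<le> 2 * M"
    and bP: "\<And>z. z \<in> strip T \<Longrightarrow> \<bar>P z\<bar> \<le> 2 * M'" and bQ: "\<And>z. z \<in> strip T \<Longrightarrow> \<bar>Q z\<bar> \<le> 2 * M'"
    and dA: "\<And>x s. s \<in> {0..T} \<Longrightarrow> ((\<lambda>x. A (x, s)) has_real_derivative P (x, s)) (at x)"
    and dB: "\<And>x s. s \<in> {0..T} \<Longrightarrow> ((\<lambda>x. B (x, s)) has_real_derivative Q (x, s)) (at x)"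
    using assms by (auto simp: admissible_def)
  have radius: "M + T * (2 * M) powr (p + q) \<le> 2 * M"
    using small_time by simp
  have "T * (2 * lip * (2 * M')) = (T * lip) * (4 * M')" by (simp add: algebra_simps)
  also have "\<dots> \<le> 1/4 * (4 * M')" using T_lip_le M' by (intro mult_right_mono) auto
  finally have radius': "M' + T * (2 * lip * (2 * M')) \<le> 2 * M'" by simp
  show ?thesis
    unfolding admissible_def
  proof (intro conjI ballI allI)
    show "continuous_on (strip T) (duhamel p q (-2) a0 A B)"
      "continuous_on (strip T) (duhamel p q 2 b0 B A)"
      "continuous_on (strip T) (duhamel_dx p q (-2) da0 A B P Q)"
      "continuous_on (strip T) (duhamel_dx p q 2 db0 B A Q P)"
      using c continuous_a0 continuous_b0 continuous_da0 continuous_db0 by (auto intro!: continuous_on_duhamel[OF p q] continuous_on_duhamel_dx[OF p q])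
    fix z assume z: "z \<in> strip T"
    have "\<bar>duhamel p q (-2) a0 A B z\<bar> \<le> M + T * (2 * M) powr (p + q)"
      "\<bar>duhamel p q 2 b0 B A z\<bar> \<le> M + T * (2 * M) powr (p + q)"
      using bA bB bounded_a0 bounded_b0 z by (intro abs_duhamel_le[OF p q] c; blast)+
    then show "\<bar>duhamel p q (-2) a0 A B z\<bar> \<le> 2 * M" "\<bar>duhamel p q 2 b0 B A z\<bar> \<le> 2 * M"
      using radius by linarith+
    have "\<bar>duhamel_dx p q (-2) da0 A B P Q z\<bar> \<le> M' + T * (2 * lip * (2 * M'))"
      "\<bar>duhamel_dx p q 2 db0 B A Q P z\<bar> \<le> M' + T * (2 * lip * (2 * M'))"
      unfolding lip_def using bA bB bP bQ bounded_da0 bounded_db0 z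
      by (intro abs_duhamel_dx_le[OF p q] c; blast)+
    then show "\<bar>duhamel_dx p q (-2) da0 A B P Q z\<bar> \<le> 2 * M'" "\<bar>duhamel_dx p q 2 db0 B A Q P z\<bar> \<le> 2 * M'"
      using radius' by linarith+
  next
    fix x s assume "s \<in> {0..T}"
    then show "((\<lambda>x. duhamel p q (-2) a0 A B (x, s)) has_real_derivative duhamel_dx p q (-2) da0 A B P Q (x, s)) (at x)"
      "((\<lambda>x. duhamel p q 2 b0 B A (x, s)) has_real_derivative duhamel_dx p q 2 db0 B A Q P (x, s)) (at x)"
      using c da0 db0 dA dB by (auto intro!: has_real_derivative_duhamel_space[OF p q])
  qed
qed

lemma admissible_iter: "admissible (iterA n) (iterB n) (iterP n) (iterQ n)"
proof (induction n)
  case 0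
  show ?case using M M' by (simp add: admissible_def iter_0)
next
  case (Suc n)
  then show ?case unfolding iter_Suc by (rule admissible_step)
qed

lemma continuous_on_iter:
  "continuous_on (strip T) (iterA n)" "continuous_on (strip T) (iterB n)"
  "continuous_on (strip T) (iterP n)" "continuous_on (strip T) (iterQ n)"
  using admissible_iter[of n] by (simp_all add: admissible_def)

lemma abs_iter_le:
  assumes "z \<in> strip T"
  shows "\<bar>iterA n z\<bar> \<le> 2 * M" "\<bar>iterB n z\<bar> \<le> 2 * M" "\<bar>iterP n z\<bar> \<le> 2 * M'" "\<bar>iterQ n z\<bar> \<le> 2 * M'"
  using admissible_iter[of n] assms unfolding admissible_def by blast+

lemma has_real_derivative_iter:
  assumes "s \<in> {0..T}"
  shows "((\<lambda>x. iterA n (x, s)) has_real_derivative iterP n (x, s)) (at x)"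
    and "((\<lambda>x. iterB n (x, s)) has_real_derivative iterQ n (x, s)) (at x)"
  using admissible_iter[of n] assms unfolding admissible_def by blast+

lemma iterAB_step_le:
  assumes "z \<in> strip T"
  shows "\<bar>iterA (Suc n) z - iterA n z\<bar> \<le> 4 * M * (1/2)^n \<and> \<bar>iterB (Suc n) z - iterB n z\<bar> \<le> 4 * M * (1/2)^n"
  using assms
proof (induction n arbitrary: z)
  case 0
  then show ?case using abs_iter_le[of z 1] M by (simp add: iter_0)
next
  case (Suc n)
  define d where "d = 4 * M * (1/2::real)^n"
  have d: "d \<ge> 0" using M by (simp add: d_def)
  have "T * (lip * (2 * d)) = (T * lip) * (2 * d)" by simp
  also have "\<dots> \<le> 1/4 * (2 * d)" using T_lip_le d by (intro mult_right_mono) auto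
  finally have contraction: "T * (lip * (2 * d)) \<le> 4 * M * (1/2)^Suc n" by (simp add: d_def)
  have "\<And>z. z \<in> strip T \<Longrightarrow> \<bar>iterA (Suc n) z - iterA n z\<bar> \<le> d"
    "\<And>z. z \<in> strip T \<Longrightarrow> \<bar>iterB (Suc n) z - iterB n z\<bar> \<le> d"
    using Suc.IH by (auto simp: d_def)
  note lipschitz = duhamel_lipschitz[OF p q continuous_on_iter(1,2) continuous_on_iter(1,2)
      abs_iter_le(1,2) abs_iter_le(1,2) this Suc.prems]
    duhamel_lipschitz[OF p q continuous_on_iter(2,1) continuous_on_iter(2,1)
      abs_iter_le(2,1) abs_iter_le(2,1) this(2,1) Suc.prems]
  show ?case
    using lipschitz[where c=a0 and k="-2"] lipschitz[where c=b0 and k=2] contraction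
    unfolding iter_Suc lip_def by linarith
qed

lemma uniformly_Cauchy_iterA: "uniformly_Cauchy_on (strip T) iterA"
  and uniformly_Cauchy_iterB: "uniformly_Cauchy_on (strip T) iterB"
  using iterAB_step_le M by (auto intro!: uniformly_Cauchy_on_geometric[where C="4 * M"])

definition coeffs_close :: "real \<Rightarrow> nat \<Rightarrow> nat \<Rightarrow> bool" where
  "coeffs_close \<eta> n m \<longleftrightarrow> (\<forall>h\<in>{nonlin_d1 p q, nonlin_d2 p q}. \<forall>z1\<in>strip T. \<forall>z2\<in>strip T.
     \<bar>h (iterA n z1) (iterB n z2) - h (iterA m z1) (iterB m z2)\<bar> \<le> \<eta> \<and>
     \<bar>h (iterB n z1) (iterA n z2) - h (iterB m z1) (iterA m z2)\<bar> \<le> \<eta>)"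

lemma eventually_coeffs_close:
  assumes "\<eta> > 0"
  shows "\<forall>\<^sub>F N in sequentially. \<forall>n\<ge>N. \<forall>m\<ge>N. coeffs_close \<eta> n m"
proof -
  let ?cases = "{nonlin_d1 p q, nonlin_d2 p q} \<times> {(iterA, iterB), (iterB, iterA)}"
  have "\<forall>\<^sub>F N in sequentially. \<forall>n\<ge>N. \<forall>m\<ge>N. \<forall>z1\<in>strip T. \<forall>z2\<in>strip T.
          \<bar>h (X n z1) (Y n z2) - h (X m z1) (Y m z2)\<bar> \<le> \<eta>"
    if hXY: "(h, X, Y) \<in> ?cases" for h X Y
  proof -
    have "continuous_on ({-(2 * M)..2 * M} \<times> {-(2 * M)..2 * M}) (\<lambda>w. h (fst w) (snd w))"
      using hXY p q by (elim SigmaE insertE emptyE; simp; intro continuous_intros; simp)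
    moreover have "uniformly_Cauchy_on (strip T) X" "uniformly_Cauchy_on (strip T) Y"
      using hXY uniformly_Cauchy_iterA uniformly_Cauchy_iterB by auto
    moreover have "\<bar>X n z\<bar> \<le> 2 * M" "\<bar>Y n z\<bar> \<le> 2 * M" if "z \<in> strip T" for n z
      using hXY abs_iter_le(1,2)[OF that, of n] by auto
    ultimately have "uniformly_Cauchy_on (strip T \<times> strip T) (\<lambda>n z. h (X n (fst z)) (Y n (snd z)))"
      by (rule uniformly_Cauchy_on_compose2)
    then obtain N where N: "\<And>z m n. z \<in> strip T \<times> strip T \<Longrightarrow> m \<ge> N \<Longrightarrow> n \<ge> N \<Longrightarrow>
        dist (h (X m (fst z)) (Y m (snd z))) (h (X n (fst z)) (Y n (snd z))) < \<eta>"
      using assms unfolding uniformly_Cauchy_on_def by meson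
    show ?thesis
      unfolding eventually_sequentially
    proof (intro exI[of _ N] allI impI ballI)
      fix N' n m z1 z2 assume "N \<le> N'" "N' \<le> n" "N' \<le> m" "z1 \<in> strip T" "z2 \<in> strip T"
      then show "\<bar>h (X n z1) (Y n z2) - h (X m z1) (Y m z2)\<bar> \<le> \<eta>"
        using N[of "(z1, z2)" n m] by (simp add: dist_real_def)
    qed
  qed
  then have "\<forall>\<^sub>F N in sequentially. \<forall>(h, X, Y)\<in>?cases. \<forall>n\<ge>N. \<forall>m\<ge>N. \<forall>z1\<in>strip T. \<forall>z2\<in>strip T.
          \<bar>h (X n z1) (Y n z2) - h (X m z1) (Y m z2)\<bar> \<le> \<eta>"
    by (intro eventually_ball_finite) auto
  then show ?thesis
    by eventually_elim (simp add: coeffs_close_def)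
qed

text \<open>
  The space derivatives solve a linear problem whose coefficients converge, so the error
  contracts by \<open>1/2\<close> per step up to the current oscillation \<open>\<eta>\<close> of the coefficients.
\<close>

lemma iterPQ_diff_le:
  assumes \<eta>: "\<eta> \<ge> 0" and close: "\<And>j. coeffs_close \<eta> (n + j) (m + j)" and z: "z \<in> strip T"
  shows "\<bar>iterP (n + k) z - iterP (m + k) z\<bar> \<le> 4 * M' * (1/2)^k + 8 * T * M' * \<eta> \<and>
         \<bar>iterQ (n + k) z - iterQ (m + k) z\<bar> \<le> 4 * M' * (1/2)^k + 8 * T * M' * \<eta>"
  using z
proof (induction k arbitrary: z)
  case 0
  have "0 \<le> 8 * T * M' * \<eta>" using T M' \<eta> by simp
  then show ?case
    using abs_iter_le(3,4)[OF 0, of n] abs_iter_le(3,4)[OF 0, of m]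
    unfolding add_0_right power_0 mult_1_right by arith
next
  case (Suc k)
  define D where "D = 4 * M' * (1/2::real)^k + 8 * T * M' * \<eta>"
  have D: "D \<ge> 0" using M' T \<eta> by (simp add: D_def)
  have "T * (2 * lip * D + 2 * \<eta> * (2 * M')) = 2 * (T * lip) * D + 4 * T * M' * \<eta>"
    by (simp add: algebra_simps)
  also have "\<dots> \<le> 2 * (1/4) * D + 4 * T * M' * \<eta>"
    using T_lip_le D by (intro add_right_mono mult_right_mono) auto
  finally have contraction: "T * (2 * lip * D + 2 * \<eta> * (2 * M')) \<le> 4 * M' * (1/2)^Suc k + 8 * T * M' * \<eta>"
    by (simp add: D_def algebra_simps)
  have hP: "\<And>z. z \<in> strip T \<Longrightarrow> \<bar>iterP (n + k) z - iterP (m + k) z\<bar> \<le> D"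
    and hQ: "\<And>z. z \<in> strip T \<Longrightarrow> \<bar>iterQ (n + k) z - iterQ (m + k) z\<bar> \<le> D"
    using Suc.IH by (auto simp: D_def)
  have coeff: "\<bar>h (iterA (n + k) w) (iterB (n + k) (shear c w)) - h (iterA (m + k) w) (iterB (m + k) (shear c w))\<bar> \<le> \<eta> \<and>
      \<bar>h (iterB (n + k) w) (iterA (n + k) (shear c w)) - h (iterB (m + k) w) (iterA (m + k) (shear c w))\<bar> \<le> \<eta>"
    if "h \<in> {nonlin_d1 p q, nonlin_d2 p q}" "w \<in> strip T" for h c w
  proof -
    have "shear c w \<in> strip T" using that(2) by simp
    with close[of k] that show ?thesis unfolding coeffs_close_def by (metis (no_types, lifting))
  qed
  note coeffs = coeff[of "nonlin_d1 p q", simplified] coeff[of "nonlin_d2 p q", simplified]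
  have "\<bar>iterP (n + Suc k) z - iterP (m + Suc k) z\<bar> \<le> T * (2 * lip * D + 2 * \<eta> * (2 * M'))"
    "\<bar>iterQ (n + Suc k) z - iterQ (m + Suc k) z\<bar> \<le> T * (2 * lip * D + 2 * \<eta> * (2 * M'))"
    unfolding lip_def add_Suc_right iter_Suc
    by (intro duhamel_dx_diff_le[OF p q continuous_on_iter continuous_on_iter abs_iter_le(1,2)
        abs_iter_le(3,4) hP hQ _ _ Suc.prems] duhamel_dx_diff_le[OF p q continuous_on_iter(2,1,4,3)
        continuous_on_iter(2,1,4,3) abs_iter_le(2,1) abs_iter_le(4,3) hQ hP _ _ Suc.prems]; simp add: coeffs)+
  then show ?case using contraction by linarith
qed

lemma uniformly_Cauchy_iterP: "uniformly_Cauchy_on (strip T) iterP"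
  and uniformly_Cauchy_iterQ: "uniformly_Cauchy_on (strip T) iterQ"
proof -
  have "\<exists>N. \<forall>z\<in>strip T. \<forall>m\<ge>N. \<forall>n\<ge>N. dist (iterP m z) (iterP n z) < e \<and> dist (iterQ m z) (iterQ n z) < e"
    if e: "e > 0" for e
  proof -
    define \<eta> where "\<eta> = e / (32 * (T * M' + 1))"
    have TM: "T * M' \<ge> 0" using T M' by simp
    have \<eta>: "\<eta> > 0" using e TM by (simp add: \<eta>_def)
    have "8 * T * M' * \<eta> = e / 4 * (T * M' / (T * M' + 1))" using TM by (simp add: \<eta>_def field_simps)
    also have "\<dots> \<le> e / 4" using TM e by (intro mult_left_le) auto
    finally have small_\<eta>: "8 * T * M' * \<eta> \<le> e / 4" .
    obtain N where N: "\<And>n m. n \<ge> N \<Longrightarrow> m \<ge> N \<Longrightarrow> coeffs_close \<eta> n m"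
      using eventually_coeffs_close[OF \<eta>] unfolding eventually_sequentially by blast
    obtain k where k: "(1/2::real)^k < e / (16 * (M' + 1))"
      using real_arch_pow_inv[of "e / (16 * (M' + 1))" "1/2"] e M' by auto
    have "4 * M' * (1/2::real)^k \<le> 4 * (M' + 1) * (1/2)^k" by (simp add: mult_right_mono)
    also have "\<dots> < 4 * (M' + 1) * (e / (16 * (M' + 1)))" using k M' by (intro mult_strict_left_mono) auto
    also have "\<dots> = e / 4" using M' by (simp add: field_simps)
    finally have small_k: "4 * M' * (1/2::real)^k < e / 4" .
    show ?thesis
    proof (intro exI[of _ "N + k"] ballI allI impI)
      fix z m n assume z: "z \<in> strip T" and mn: "N + k \<le> m" "N + k \<le> n"
      have "\<bar>iterP (m - k + k) z - iterP (n - k + k) z\<bar> \<le> 4 * M' * (1/2)^k + 8 * T * M' * \<eta> \<and>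
            \<bar>iterQ (m - k + k) z - iterQ (n - k + k) z\<bar> \<le> 4 * M' * (1/2)^k + 8 * T * M' * \<eta>"
        using mn by (intro iterPQ_diff_le less_imp_le[OF \<eta>] N z) auto
      then show "dist (iterP m z) (iterP n z) < e \<and> dist (iterQ m z) (iterQ n z) < e"
        using mn small_k small_\<eta> e by (simp add: dist_real_def)
    qed
  qed
  then show "uniformly_Cauchy_on (strip T) iterP" "uniformly_Cauchy_on (strip T) iterQ"
    unfolding uniformly_Cauchy_on_def by meson+
qed

definition "limA = (SOME l. uniform_limit (strip T) iterA l sequentially)"
definition "limB = (SOME l. uniform_limit (strip T) iterB l sequentially)"
definition "limP = (SOME l. uniform_limit (strip T) iterP l sequentially)"
definition "limQ = (SOME l. uniform_limit (strip T) iterQ l sequentially)"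

lemma uniform_limit_iter:
  "uniform_limit (strip T) iterA limA sequentially" "uniform_limit (strip T) iterB limB sequentially"
  "uniform_limit (strip T) iterP limP sequentially" "uniform_limit (strip T) iterQ limQ sequentially"
proof -
  have "uniform_limit (strip T) f (SOME l. uniform_limit (strip T) f l sequentially) sequentially"
    if "uniformly_Cauchy_on (strip T) f" for f :: "nat \<Rightarrow> real \<times> real \<Rightarrow> real"
    using Cauchy_uniformly_convergent[OF that] unfolding uniformly_convergent_on_def by (rule someI_ex)
  then show "uniform_limit (strip T) iterA limA sequentially" "uniform_limit (strip T) iterB limB sequentially"
    "uniform_limit (strip T) iterP limP sequentially" "uniform_limit (strip T) iterQ limQ sequentially"
    unfolding limA_def limB_def limP_def limQ_def
    using uniformly_Cauchy_iterA uniformly_Cauchy_iterB uniformly_Cauchy_iterP uniformly_Cauchy_iterQ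
    by blast+
qed

lemma continuous_on_lim:
  "continuous_on (strip T) limA" "continuous_on (strip T) limB"
  "continuous_on (strip T) limP" "continuous_on (strip T) limQ"
  by (rule uniform_limit_theorem[OF always_eventually[OF allI] _ trivial_limit_sequentially];
      rule continuous_on_iter uniform_limit_iter)+

lemma abs_lim_le:
  assumes "z \<in> strip T"
  shows "\<bar>limA z\<bar> \<le> 2 * M" "\<bar>limB z\<bar> \<le> 2 * M"
  using LIMSEQ_le_const2[OF tendsto_rabs[OF tendsto_uniform_limitI[OF uniform_limit_iter(1) assms]]]
    LIMSEQ_le_const2[OF tendsto_rabs[OF tendsto_uniform_limitI[OF uniform_limit_iter(2) assms]]]
    abs_iter_le(1,2)[OF assms] by blast+

lemma duhamel_tendsto:
  fixes X Y :: "nat \<Rightarrow> real \<times> real \<Rightarrow> real"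
  assumes X: "uniform_limit (strip T) X X0 sequentially" and Y: "uniform_limit (strip T) Y Y0 sequentially"
    and "\<And>n. continuous_on (strip T) (X n)" "\<And>n. continuous_on (strip T) (Y n)"
    and "continuous_on (strip T) X0" "continuous_on (strip T) Y0"
    and "\<And>n z. z \<in> strip T \<Longrightarrow> \<bar>X n z\<bar> \<le> 2 * M" "\<And>n z. z \<in> strip T \<Longrightarrow> \<bar>Y n z\<bar> \<le> 2 * M"
    and "\<And>z. z \<in> strip T \<Longrightarrow> \<bar>X0 z\<bar> \<le> 2 * M" "\<And>z. z \<in> strip T \<Longrightarrow> \<bar>Y0 z\<bar> \<le> 2 * M"
    and z: "z \<in> strip T"
  shows "(\<lambda>n. duhamel p q k c (X n) (Y n) z) \<longlonglongrightarrow> duhamel p q k c X0 Y0 z"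
proof (rule tendstoI)
  fix e :: real assume e: "e > 0"
  have "\<forall>\<^sub>F n in sequentially. (\<forall>w\<in>strip T. dist (X n w) (X0 w) < e) \<and> (\<forall>w\<in>strip T. dist (Y n w) (Y0 w) < e)"
    using X Y e unfolding uniform_limit_iff by (auto intro: eventually_conj)
  then show "\<forall>\<^sub>F n in sequentially. dist (duhamel p q k c (X n) (Y n) z) (duhamel p q k c X0 Y0 z) < e"
  proof eventually_elim
    case (elim n)
    have "\<bar>duhamel p q k c (X n) (Y n) z - duhamel p q k c X0 Y0 z\<bar> \<le> T * (lip * (2 * e))"
      unfolding lip_def
      by (rule duhamel_lipschitz[OF p q assms(3-10)]) (use elim z in \<open>auto simp: dist_real_def less_imp_le\<close>)
    also have "\<dots> \<le> 1/4 * (2 * e)"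
      using T_lip_le e by (simp add: mult.assoc[symmetric] mult_right_mono)
    also have "\<dots> < e" using e by simp
    finally show ?case by (simp add: dist_real_def)
  qed
qed

lemma lim_fixpoint:
  assumes "z \<in> strip T"
  shows "limA z = duhamel p q (-2) a0 limA limB z" "limB z = duhamel p q 2 b0 limB limA z"
proof -
  note limits = uniform_limit_iter(1,2) continuous_on_iter(1,2) continuous_on_lim(1,2)
    abs_iter_le(1,2) abs_lim_le(1,2)
  have "(\<lambda>n. iterA (Suc n) z) \<longlonglongrightarrow> duhamel p q (-2) a0 limA limB z"
    "(\<lambda>n. iterB (Suc n) z) \<longlonglongrightarrow> duhamel p q 2 b0 limB limA z"
    unfolding iter_Suc using assms
    by (intro duhamel_tendsto limits; simp)+
  moreover have "(\<lambda>n. iterA (Suc n) z) \<longlonglongrightarrow> limA z" "(\<lambda>n. iterB (Suc n) z) \<longlonglongrightarrow> limB z"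
    using LIMSEQ_Suc[OF tendsto_uniform_limitI[OF uniform_limit_iter(1) assms]]
      LIMSEQ_Suc[OF tendsto_uniform_limitI[OF uniform_limit_iter(2) assms]] .
  ultimately show "limA z = duhamel p q (-2) a0 limA limB z" "limB z = duhamel p q 2 b0 limB limA z"
    using LIMSEQ_unique by metis+
qed

lemma has_real_derivative_lim:
  assumes "t \<in> {0..T}"
  shows "((\<lambda>x. limA (x, t)) has_real_derivative limP (x, t)) (at x)"
    and "((\<lambda>x. limB (x, t)) has_real_derivative limQ (x, t)) (at x)"
  using assms
  by (intro has_real_derivative_uniform_limit_slice[OF uniform_limit_iter(1,3)]
      has_real_derivative_uniform_limit_slice[OF uniform_limit_iter(2,4)] has_real_derivative_iter; simp)+

lemma exists_fixpoint:
  "\<exists>A B P Q. continuous_on (strip T) A \<and> continuous_on (strip T) B \<and>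
     continuous_on (strip T) P \<and> continuous_on (strip T) Q \<and>
     (\<forall>z\<in>strip T. A z = duhamel p q (-2) a0 A B z \<and> B z = duhamel p q 2 b0 B A z) \<and>
     (\<forall>t\<in>{0..T}. \<forall>x. ((\<lambda>x. A (x, t)) has_real_derivative P (x, t)) (at x) \<and>
                      ((\<lambda>x. B (x, t)) has_real_derivative Q (x, t)) (at x))"
  using continuous_on_lim lim_fixpoint has_real_derivative_lim by blast

end

text \<open>
  Here \<open>v\<close> and \<open>w\<close> play the roles of \<open>u\<^sub>t\<close> and \<open>u\<^sub>x\<close>; the compatibility \<open>\<partial>\<^sub>t w = \<partial>\<^sub>x v\<close> built
  into the hypotheses makes \<open>u = \<epsilon> f + \<integral>\<^sub>0\<^sup>t v\<close> satisfy \<open>u\<^sub>x = w\<close>.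
\<close>

lemma classical_solution_of_first_order_system:
  fixes v w vx vt wx :: "real \<times> real \<Rightarrow> real"
  assumes v: "continuous_on (strip T) v" and vx: "continuous_on (strip T) vx"
    and vt: "continuous_on (strip T) vt" and wx: "continuous_on (strip T) wx"
    and Dv: "\<And>z. z \<in> strip T \<Longrightarrow> (v has_derivative (\<lambda>(h, k). vx z * h + vt z * k)) (at z within strip T)"
    and Dw: "\<And>z. z \<in> strip T \<Longrightarrow> (w has_derivative (\<lambda>(h, k). wx z * h + vx z * k)) (at z within strip T)"
    and equation: "\<And>x t. 0 < t \<Longrightarrow> t < T \<Longrightarrow> vt (x, t) - wx (x, t) = \<bar>v (x, t)\<bar> powr p * \<bar>w (x, t)\<bar> powr q"
    and v0: "\<And>x. v (x, 0) = \<epsilon> * g x" and w0: "\<And>x. w (x, 0) = \<epsilon> * f' x"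
    and df: "\<And>x. (f has_real_derivative f' x) (at x)"
  shows "\<exists>u. classical_solution p q \<epsilon> f g T u"
proof -
  define u where "u z = \<epsilon> * f (fst z) + time_primitive v z" for z
  have ux: "((\<lambda>x. u (x, t)) has_real_derivative w (x, t)) (at x)" if t: "t \<in> {0..T}" for x t
  proof -
    have "((\<lambda>x. time_primitive v (x, t)) has_real_derivative w (x, t) - \<epsilon> * f' x) (at x)"
      using has_real_derivative_time_primitive_exact[OF v vx
          has_real_derivative_strip_slices(1)[OF Dv] has_real_derivative_strip_slices(2)[OF Dw] t]
      by (simp add: w0)
    then show ?thesis
      unfolding u_def using df by (auto intro!: derivative_eq_intros)
  qed
  have ut: "((\<lambda>t. u (x, t)) has_real_derivative v (x, t)) (at t within {0..T})" if "t \<in> {0..T}" for x t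
    unfolding u_def using has_real_derivative_time_primitive_time[OF v that]
    by (auto intro!: derivative_eq_intros)
  have Du: "(u has_derivative (\<lambda>(h, k). w z * h + v z * k)) (at z within strip T)"
    if z: "z \<in> strip T" for z
  proof -
    obtain x t where "z = (x, t)" "t \<in> {0..T}" using z by auto
    then show ?thesis
      using has_derivative_strip_of_partials[where F=u and Fx=w and Ft=v, OF ux ut v] by simp
  qed
  have initial: "u (x, 0) = \<epsilon> * f x \<and> v (x, 0) = \<epsilon> * g x" for x
    by (simp add: u_def time_primitive_def v0)
  show ?thesis
    unfolding classical_solution_def Let_def
    by (rule exI[of _ u], rule exI[of _ w], rule exI[of _ v], rule exI[of _ wx], rule exI[of _ vx],
        rule exI[of _ vx], rule exI[of _ vt]) (use Du Dw Dv wx vx vt equation initial in blast)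
qed

lemma classical_solution_of_riemann_invariants:
  fixes a b ax bx :: "real \<times> real \<Rightarrow> real"
  assumes p: "p > 1" and q: "q > 1"
    and a: "continuous_on (strip T) a" and b: "continuous_on (strip T) b"
    and ax: "continuous_on (strip T) ax" and bx: "continuous_on (strip T) bx"
    and Da: "\<And>z. z \<in> strip T \<Longrightarrow>
      (a has_derivative (\<lambda>(h, k). ax z * h + (ax z + nonlin p q (a z) (b z)) * k)) (at z within strip T)"
    and Db: "\<And>z. z \<in> strip T \<Longrightarrow>
      (b has_derivative (\<lambda>(h, k). bx z * h + (nonlin p q (a z) (b z) - bx z) * k)) (at z within strip T)"
    and a0: "\<And>x. a (x, 0) = \<epsilon> * g x + \<epsilon> * f' x" and b0: "\<And>x. b (x, 0) = \<epsilon> * g x - \<epsilon> * f' x"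
    and df: "\<And>x. (f has_real_derivative f' x) (at x)"
  shows "\<exists>u. classical_solution p q \<epsilon> f g T u"
proof -
  define F where "F z = nonlin p q (a z) (b z)" for z
  define wx where "wx z = (ax z - bx z) / 2" for z
  define vx where "vx z = (ax z + bx z) / 2" for z
  define vt where "vt z = (ax z - bx z) / 2 + F z" for z
  have half: "((\<lambda>z. f z / 2) has_derivative (\<lambda>y. f' y / 2)) G" if "(f has_derivative f') G"
    for f f' :: "real \<times> real \<Rightarrow> real" and G
    using has_derivative_scaleR_right[OF that, of "1/2"] by simp
  show ?thesis
  proof (rule classical_solution_of_first_order_system[where vx=vx and vt=vt and wx=wx, OF _ _ _ _ _ _ _ _ _ df])
    show "continuous_on (strip T) (\<lambda>z. (a z + b z) / 2)" "continuous_on (strip T) vx"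
      "continuous_on (strip T) vt" "continuous_on (strip T) wx"
      unfolding vx_def vt_def wx_def F_def using p q a b ax bx by (auto intro!: continuous_intros)
    fix z assume z: "z \<in> strip T"
    show "((\<lambda>z. (a z + b z) / 2) has_derivative (\<lambda>(h, k). vx z * h + vt z * k)) (at z within strip T)"
      by (rule has_derivative_eq_rhs[OF half[OF has_derivative_add[OF Da[OF z] Db[OF z]]]])
        (auto simp: vx_def vt_def F_def field_simps fun_eq_iff split: prod.splits)
    show "((\<lambda>z. (a z - b z) / 2) has_derivative (\<lambda>(h, k). wx z * h + vx z * k)) (at z within strip T)"
      by (rule has_derivative_eq_rhs[OF half[OF has_derivative_diff[OF Da[OF z] Db[OF z]]]])
        (auto simp: vx_def wx_def field_simps fun_eq_iff split: prod.splits)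
  qed (simp_all add: vt_def wx_def F_def nonlin_def abs_pow_def a0 b0)
qed

lemma (in char_iteration) classical_solution_exists:
  assumes df: "\<And>x. (f has_real_derivative f' x) (at x)"
    and a0_eq: "\<And>x. a0 x = \<epsilon> * g x + \<epsilon> * f' x" and b0_eq: "\<And>x. b0 x = \<epsilon> * g x - \<epsilon> * f' x"
  shows "\<exists>u. classical_solution p q \<epsilon> f g T u"
proof -
  obtain A B P Q where A: "continuous_on (strip T) A" and B: "continuous_on (strip T) B"
    and P: "continuous_on (strip T) P" and Q: "continuous_on (strip T) Q"
    and fixpoint: "\<And>z. z \<in> strip T \<Longrightarrow> A z = duhamel p q (-2) a0 A B z \<and> B z = duhamel p q 2 b0 B A z"
    and Ax: "\<And>t x. t \<in> {0..T} \<Longrightarrow> ((\<lambda>x. A (x, t)) has_real_derivative P (x, t)) (at x)"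
    and Bx: "\<And>t x. t \<in> {0..T} \<Longrightarrow> ((\<lambda>x. B (x, t)) has_real_derivative Q (x, t)) (at x)"
    using exists_fixpoint by blast
  have DA: "(A has_derivative (\<lambda>(h, l). P z * h + nonlin p q (A z) (B (shear (-2) z)) * l)) (at z within strip T)"
    and DB: "(B has_derivative (\<lambda>(h, l). Q z * h + nonlin p q (B z) (A (shear 2 z)) * l)) (at z within strip T)"
    if "z \<in> strip T" for z
    using fixpoint that
    by (intro duhamel_fixpoint_has_derivative[OF p q A B _ Ax] duhamel_fixpoint_has_derivative[OF p q B A _ Bx]; blast)+
  show ?thesis
  proof (rule classical_solution_of_riemann_invariants[OF p q _ _ _ _ _ _ _ _ df])
    show "continuous_on (strip T) (\<lambda>z. A (shear 1 z))" "continuous_on (strip T) (\<lambda>z. B (shear (-1) z))"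
      "continuous_on (strip T) (\<lambda>z. P (shear 1 z))" "continuous_on (strip T) (\<lambda>z. Q (shear (-1) z))"
      using A B P Q by (auto intro: continuous_on_shear)
    fix z assume z: "z \<in> strip T"
    show "((\<lambda>z. A (shear 1 z)) has_derivative (\<lambda>(h, k). P (shear 1 z) * h
        + (P (shear 1 z) + nonlin p q (A (shear 1 z)) (B (shear (-1) z))) * k)) (at z within strip T)"
      using has_derivative_shear_comp[OF DA z, of 1] by simp
    show "((\<lambda>z. B (shear (-1) z)) has_derivative (\<lambda>(h, k). Q (shear (-1) z) * h
        + (nonlin p q (A (shear 1 z)) (B (shear (-1) z)) - Q (shear (-1) z)) * k)) (at z within strip T)"
      using has_derivative_shear_comp[OF DB z, of "-1"] by (simp add: nonlin_commute)
  next
    show "A (shear 1 (x, 0)) = \<epsilon> * g x + \<epsilon> * f' x" "B (shear (-1) (x, 0)) = \<epsilon> * g x - \<epsilon> * f' x" for x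
      using fixpoint[of "(x, 0)"] T by (simp_all add: a0_eq b0_eq)
  qed
qed

lemma classical_solution_exists_small_time:
  fixes f g f' f'' g' :: "real \<Rightarrow> real"
  assumes p: "p > 1" and q: "q > 1" and T: "T \<ge> 0" and \<epsilon>: "\<epsilon> > 0"
    and df: "\<And>x. (f has_real_derivative f' x) (at x)"
    and df': "\<And>x. (f' has_real_derivative f'' x) (at x)"
    and dg: "\<And>x. (g has_real_derivative g' x) (at x)"
    and continuous_f'': "continuous_on UNIV f''" and continuous_g': "continuous_on UNIV g'"
    and C0: "C0 > 0" and C1: "C1 \<ge> 0"
    and bound0: "\<And>x. \<bar>g x\<bar> + \<bar>f' x\<bar> \<le> C0" and bound1: "\<And>x. \<bar>g' x\<bar> + \<bar>f'' x\<bar> \<le> C1"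
    and small_time: "T * (2 * (\<epsilon> * C0)) powr (p + q) \<le> \<epsilon> * C0"
    and small_time_lipschitz: "T * ((p + q) * (2 * (\<epsilon> * C0)) powr (p + q - 1)) \<le> 1/4"
  shows "\<exists>u. classical_solution p q \<epsilon> f g T u"
proof -
  have scaled: "\<bar>\<epsilon> * u + \<epsilon> * v\<bar> \<le> \<epsilon> * C" "\<bar>\<epsilon> * u - \<epsilon> * v\<bar> \<le> \<epsilon> * C"
    if "\<bar>u\<bar> + \<bar>v\<bar> \<le> C" for u v C :: real
  proof -
    have "\<bar>\<epsilon> * u + \<epsilon> * v\<bar> \<le> \<epsilon> * (\<bar>u\<bar> + \<bar>v\<bar>)" "\<bar>\<epsilon> * u - \<epsilon> * v\<bar> \<le> \<epsilon> * (\<bar>u\<bar> + \<bar>v\<bar>)"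
      using \<epsilon> by (auto simp: abs_mult distrib_left[symmetric] right_diff_distrib[symmetric]
          intro!: mult_left_mono abs_triangle_ineq abs_triangle_ineq4)
    moreover have "\<epsilon> * (\<bar>u\<bar> + \<bar>v\<bar>) \<le> \<epsilon> * C" using that \<epsilon> by (intro mult_left_mono) auto
    ultimately show "\<bar>\<epsilon> * u + \<epsilon> * v\<bar> \<le> \<epsilon> * C" "\<bar>\<epsilon> * u - \<epsilon> * v\<bar> \<le> \<epsilon> * C" by linarith+
  qed
  interpret char_iteration p q T "\<epsilon> * C0" "\<epsilon> * C1" "\<lambda>x. \<epsilon> * g x + \<epsilon> * f' x" "\<lambda>x. \<epsilon> * g x - \<epsilon> * f' x"
    "\<lambda>x. \<epsilon> * g' x + \<epsilon> * f'' x" "\<lambda>x. \<epsilon> * g' x - \<epsilon> * f'' x"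
  proof unfold_locales
    show "((\<lambda>x. \<epsilon> * g x + \<epsilon> * f' x) has_real_derivative \<epsilon> * g' x + \<epsilon> * f'' x) (at x)"
      "((\<lambda>x. \<epsilon> * g x - \<epsilon> * f' x) has_real_derivative \<epsilon> * g' x - \<epsilon> * f'' x) (at x)" for x
      using dg df' by (auto intro!: derivative_eq_intros)
    show "continuous_on UNIV (\<lambda>x. \<epsilon> * g' x + \<epsilon> * f'' x)" "continuous_on UNIV (\<lambda>x. \<epsilon> * g' x - \<epsilon> * f'' x)"
      using continuous_f'' continuous_g' by (auto intro!: continuous_intros)
  qed (use p q T \<epsilon> C0 C1 small_time small_time_lipschitz scaled bound0 bound1 in auto)
  show ?thesis
    using classical_solution_exists[OF df] by simp
qed

section \<open>Lifespan\<close>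

lemma has_real_derivative_zero_outside:
  fixes h h' :: "real \<Rightarrow> real"
  assumes d: "\<And>x. (h has_real_derivative h' x) (at x)" and zero: "\<And>x. \<bar>x\<bar> > R \<Longrightarrow> h x = 0"
    and x: "\<bar>x\<bar> > R"
  shows "h' x = 0"
proof -
  have "(h has_real_derivative 0) (at x)"
  proof (rule has_field_derivative_transform_within_open[of "\<lambda>y. 0" 0 x "{y. R < \<bar>y\<bar>}"])
    show "open {y::real. R < \<bar>y\<bar>}" by (intro open_Collect_less continuous_intros)
  qed (use x zero in auto)
  then show ?thesis using DERIV_unique d by blast
qed

lemma continuous_supported_bounded:
  fixes h :: "real \<Rightarrow> real"
  assumes "continuous_on UNIV h" and zero: "\<And>x. \<bar>x\<bar> > R \<Longrightarrow> h x = 0"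
  obtains B where "B \<ge> 0" "\<And>x. \<bar>h x\<bar> \<le> B"
proof -
  have "bounded (h ` {-R..R})"
    by (intro compact_imp_bounded compact_continuous_image continuous_on_subset[OF assms(1)]) auto
  then obtain B where B: "\<forall>x\<in>{-R..R}. \<bar>h x\<bar> \<le> B" unfolding bounded_iff by auto
  have "\<bar>h x\<bar> \<le> max B 0" for x
  proof (cases "\<bar>x\<bar> > R")
    case False
    then have "x \<in> {-R..R}" by (auto simp: abs_le_iff)
    then have "\<bar>h x\<bar> \<le> B" using B by blast
    then show ?thesis by linarith
  qed (simp add: zero)
  then show ?thesis by (intro that[of "max B 0"]) auto
qed

lemma initial_data_bounds:
  assumes "C2_supp R f" and "C1_supp R g"
  obtains f' f'' g' C0 C1 where "\<And>x. (f has_real_derivative f' x) (at x)"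
    "\<And>x. (f' has_real_derivative f'' x) (at x)" "\<And>x. (g has_real_derivative g' x) (at x)"
    "continuous_on UNIV f''" "continuous_on UNIV g'" "C0 > 0" "C1 \<ge> 0"
    "\<And>x. \<bar>g x\<bar> + \<bar>f' x\<bar> \<le> C0" "\<And>x. \<bar>g' x\<bar> + \<bar>f'' x\<bar> \<le> C1"
proof -
  obtain f' f'' where df: "\<And>x. (f has_real_derivative f' x) (at x)"
    and df': "\<And>x. (f' has_real_derivative f'' x) (at x)" and continuous_f'': "continuous_on UNIV f''"
    and f_zero: "\<And>x. \<bar>x\<bar> > R \<Longrightarrow> f x = 0"
    using assms(1) unfolding C2_supp_def by blast
  obtain g' where dg: "\<And>x. (g has_real_derivative g' x) (at x)" and continuous_g': "continuous_on UNIV g'"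
    and g_zero: "\<And>x. \<bar>x\<bar> > R \<Longrightarrow> g x = 0"
    using assms(2) unfolding C1_supp_def by blast
  have f'_zero: "\<And>x. \<bar>x\<bar> > R \<Longrightarrow> f' x = 0"
    using has_real_derivative_zero_outside[OF df f_zero] .
  have f''_zero: "\<And>x. \<bar>x\<bar> > R \<Longrightarrow> f'' x = 0"
    using has_real_derivative_zero_outside[OF df' f'_zero] .
  have g'_zero: "\<And>x. \<bar>x\<bar> > R \<Longrightarrow> g' x = 0"
    using has_real_derivative_zero_outside[OF dg g_zero] .
  have "continuous_on UNIV g" "continuous_on UNIV f'"
    using dg df' by (auto intro!: continuous_at_imp_continuous_on DERIV_isCont)
  obtain Bg Bf' Bg' Bf'' where B: "\<And>x. \<bar>g x\<bar> \<le> Bg" "\<And>x. \<bar>f' x\<bar> \<le> Bf'"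
    "\<And>x. \<bar>g' x\<bar> \<le> Bg'" "\<And>x. \<bar>f'' x\<bar> \<le> Bf''" "Bg \<ge> 0" "Bf' \<ge> 0" "Bg' \<ge> 0" "Bf'' \<ge> 0"
    using continuous_supported_bounded[OF \<open>continuous_on UNIV g\<close> g_zero]
      continuous_supported_bounded[OF \<open>continuous_on UNIV f'\<close> f'_zero]
      continuous_supported_bounded[OF continuous_g' g'_zero]
      continuous_supported_bounded[OF continuous_f'' f''_zero] by metis
  have "\<bar>g x\<bar> + \<bar>f' x\<bar> \<le> Bg + Bf' + 1" "\<bar>g' x\<bar> + \<bar>f'' x\<bar> \<le> Bg' + Bf''" for x
    using B(1-4)[of x] by linarith+
  then show ?thesis
    using B(5-8) by (intro that[OF df df' dg continuous_f'' continuous_g', of "Bg + Bf' + 1"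
          "Bg' + Bf''"]) auto
qed

text \<open>
  Both smallness conditions only involve \<open>T \<epsilon>\<^bsup>p+q-1\<^esup>\<close>: this is where the lifespan
  \<open>\<epsilon>\<^bsup>-(p+q-1)\<^esup>\<close> comes from.
\<close>

lemma small_time_scaling:
  fixes p q C0 :: real
  assumes p: "p > 1" and q: "q > 1" and C0: "C0 > 0"
  obtains c where "c > 0"
    "\<And>\<epsilon> T. \<epsilon> > 0 \<Longrightarrow> 0 \<le> T \<Longrightarrow> T \<le> c * \<epsilon> powr (-(p + q - 1)) \<Longrightarrow>
       T * (2 * (\<epsilon> * C0)) powr (p + q) \<le> \<epsilon> * C0 \<and> T * ((p + q) * (2 * (\<epsilon> * C0)) powr (p + q - 1)) \<le> 1/4"
proof -
  define K0 where "K0 = (2 * C0) powr (p + q)"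
  define K1 where "K1 = (p + q) * (2 * C0) powr (p + q - 1)"
  have K: "K0 > 0" "K1 > 0" using C0 p q by (simp_all add: K0_def K1_def)
  define c where "c = min (C0 / K0) (1 / (4 * K1))"
  have c: "c > 0" using K C0 by (simp add: c_def)
  have "T * (2 * (\<epsilon> * C0)) powr (p + q) \<le> \<epsilon> * C0 \<and> T * ((p + q) * (2 * (\<epsilon> * C0)) powr (p + q - 1)) \<le> 1/4"
    if \<epsilon>: "\<epsilon> > 0" and T: "0 \<le> T" "T \<le> c * \<epsilon> powr (-(p + q - 1))" for \<epsilon> T
  proof -
    define s where "s = T * \<epsilon> powr (p + q - 1)"
    have "s \<le> c * (\<epsilon> powr (-(p + q - 1)) * \<epsilon> powr (p + q - 1))"
      using T \<epsilon> by (simp add: s_def mult_right_mono)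
    then have s: "s \<le> c" "s \<ge> 0" using \<epsilon> T by (simp_all add: s_def powr_add[symmetric])
    have "\<epsilon> powr (p + q) = \<epsilon> powr (p + q - 1) * \<epsilon>"
      using powr_add[of \<epsilon> "p + q - 1" 1] \<epsilon> by simp
    then have "T * (2 * (\<epsilon> * C0)) powr (p + q) = s * \<epsilon> * K0"
      using \<epsilon> C0 by (simp add: s_def K0_def powr_mult algebra_simps)
    also have "\<dots> \<le> C0 / K0 * \<epsilon> * K0"
      using s K \<epsilon> by (intro mult_right_mono) (auto simp: c_def)
    also have "\<dots> = \<epsilon> * C0" using K by simp
    finally have first: "T * (2 * (\<epsilon> * C0)) powr (p + q) \<le> \<epsilon> * C0" .
    have "T * ((p + q) * (2 * (\<epsilon> * C0)) powr (p + q - 1)) = s * K1"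
      using \<epsilon> C0 by (simp add: s_def K1_def powr_mult algebra_simps)
    also have "\<dots> \<le> 1 / (4 * K1) * K1"
      using s K by (intro mult_right_mono) (auto simp: c_def)
    finally show ?thesis using first K by simp
  qed
  then show ?thesis using c that by blast
qed

theorem theorem2p1:
  fixes p q R :: real and f g :: "real \<Rightarrow> real"
  assumes "p > 1" and "q > 1" and "R \<ge> 1"
    and "C2_supp R f" and "C1_supp R g"
  shows "\<exists>\<epsilon>0 > 0. \<exists>c > 0. \<forall>\<epsilon>. 0 < \<epsilon> \<and> \<epsilon> \<le> \<epsilon>0 \<longrightarrow>
           (\<forall>T. 0 < T \<and> T \<le> c * \<epsilon> powr (-(p + q - 1)) \<longrightarrow>
                 (\<exists>u. classical_solution p q \<epsilon> f g T u)) \<and>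
           lifespan p q \<epsilon> f g \<ge> ereal (c * \<epsilon> powr (-(p + q - 1)))"
proof -
  obtain f' f'' g' C0 C1 where data: "\<And>x. (f has_real_derivative f' x) (at x)"
    "\<And>x. (f' has_real_derivative f'' x) (at x)" "\<And>x. (g has_real_derivative g' x) (at x)"
    "continuous_on UNIV f''" "continuous_on UNIV g'" "C0 > 0" "C1 \<ge> 0"
    "\<And>x. \<bar>g x\<bar> + \<bar>f' x\<bar> \<le> C0" "\<And>x. \<bar>g' x\<bar> + \<bar>f'' x\<bar> \<le> C1"
    using initial_data_bounds[OF assms(4,5)] by blast
  obtain c where c: "c > 0" and small: "\<And>\<epsilon> T. \<epsilon> > 0 \<Longrightarrow> 0 \<le> T \<Longrightarrow> T \<le> c * \<epsilon> powr (-(p + q - 1)) \<Longrightarrow>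
      T * (2 * (\<epsilon> * C0)) powr (p + q) \<le> \<epsilon> * C0 \<and> T * ((p + q) * (2 * (\<epsilon> * C0)) powr (p + q - 1)) \<le> 1/4"
    using small_time_scaling[OF assms(1,2) data(6)] by blast
  have exists: "\<exists>u. classical_solution p q \<epsilon> f g T u"
    if "\<epsilon> > 0" "0 \<le> T" "T \<le> c * \<epsilon> powr (-(p + q - 1))" for \<epsilon> T
    using small[OF that] that
    by (intro classical_solution_exists_small_time[OF assms(1,2) _ _ data]) auto
  have "lifespan p q \<epsilon> f g \<ge> ereal (c * \<epsilon> powr (-(p + q - 1)))" if "\<epsilon> > 0" for \<epsilon>
    unfolding lifespan_def using exists[OF that] c that by (intro Sup_upper imageI) auto
  then show ?thesis
    using exists c by (intro exI[of _ 1]) auto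
qed

end
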